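(* The function $\sigma_+(u)$ is non-increasing in $u\geq 1$, the function $\sigma_-(u)$ is non-decreasing in $u\geq 1$, and $\sigma_+(u)\to 1$ and $\sigma_-(u)\to 1$ as $u\to\infty$.
   Context: For $z\geq 2$ let $P(z):=\prod_{p\leq z}p$ (product over primes). For real $x$ and $y,z>0$ let $S(x,y,z):=\#\{n\in(x,x+y]\cap\mathbb{Z}:\ \gcd(n,P(z))=1\}$, and define $S^+(y,z):=\max_x S(x,y,z)$ and $S^-(y,z):=\min_x S(x,y,z)$. For each fixed $u\geq 1$ define $$\sigma_+(u):=\limsup_{z\to\infty} \frac{S^+(z^u,z)}{\prod_{p\leq z}(1-\frac1p)\cdot z^u},\qquad \sigma_-(u):=\liminf_{z\to\infty} \frac{S^-(z^u,z)}{\prod_{p\leq z}(1-\frac1p)\cdot z^u}.$$ *)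

theory Defs
  imports "HOL-Analysis.Analysis" "HOL-Computational_Algebra.Primes"
begin

definition primorial_P :: "real \<Rightarrow> int" where
  "primorial_P z = (\<Prod>p\<in>{p::nat. prime p \<and> real p \<le> z}. int p)"

definition sieve_S :: "real \<Rightarrow> real \<Rightarrow> real \<Rightarrow> nat" where
  "sieve_S x y z = card {n::int. x < real_of_int n \<and> real_of_int n \<le> x + y
                                 \<and> coprime n (primorial_P z)}"

definition sieve_S_plus :: "real \<Rightarrow> real \<Rightarrow> nat" where
  "sieve_S_plus y z = Sup (range (\<lambda>x. sieve_S x y z))"

definition sieve_S_minus :: "real \<Rightarrow> real \<Rightarrow> nat" where
  "sieve_S_minus y z = Inf (range (\<lambda>x. sieve_S x y z))"

definition mertens_prod :: "real \<Rightarrow> real" where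
  "mertens_prod z = (\<Prod>p\<in>{p::nat. prime p \<and> real p \<le> z}. 1 - 1 / real p)"

definition sigma_plus :: "real \<Rightarrow> ereal" where
  "sigma_plus u = Limsup at_top
     (\<lambda>z. ereal (real (sieve_S_plus (z powr u) z) / (mertens_prod z * z powr u)))"

definition sigma_minus :: "real \<Rightarrow> ereal" where
  "sigma_minus u = Liminf at_top
     (\<lambda>z. ereal (real (sieve_S_minus (z powr u) z) / (mertens_prod z * z powr u)))"

end

theory Submission
  imports Defs
begin

text \<open>The monotonicity of \<open>\<sigma>\<^sub>+\<close> and \<open>\<sigma>\<^sub>-\<close> comes from tiling: an interval of length \<open>z\<^sup>v\<close> is covered
  by \<open>\<lceil>z\<^sup>v\<^sup>-\<^sup>u\<rceil>\<close> and contains \<open>\<lfloor>z\<^sup>v\<^sup>-\<^sup>u\<rfloor>\<close> consecutive intervals of length \<open>z\<^sup>u\<close>, so the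
  normalised extremal counts at \<open>v\<close> are within a factor \<open>1 \<plusminus> z\<^sup>u\<^sup>-\<^sup>v\<close> of those at \<open>u\<close>.

  The limits are the fundamental lemma of sieve theory, proved here by Brun's pure sieve. The
  primes up to \<open>z\<close> are split into the blocks \<open>(2^2^(j-1), 2^2^j]\<close>; on each block the indicator of
  "no prime factor in the block" is replaced by its inclusion-exclusion expansion truncated at an
  even level (Bonferroni's inequalities). Each truncated expansion counts multiples of few
  squarefree numbers, with error 1 per term, and choosing the levels to decrease with the block
  keeps the total error \<open>z\<^sup>O\<^sup>(\<^sup>a\<^sup>)\<close> while the relative error of the main term is \<open>O(4\<^sup>-\<^sup>a)\<close>.
  For \<open>u \<ge> 8a + 15\<close> the interval length \<open>z\<^sup>u\<close> swamps the error, so both \<open>\<sigma>\<^sub>+(u)\<close> and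
  \<open>\<sigma>\<^sub>-(u)\<close> lie within \<open>O(4\<^sup>-\<^sup>a)\<close> of 1.\<close>

section \<open>Truncated inclusion-exclusion\<close>

definition subset_sum :: "('a set \<Rightarrow> real) \<Rightarrow> ('a \<Rightarrow> real) \<Rightarrow> 'a set \<Rightarrow> real" where
  "subset_sum c g B = (\<Sum>D\<in>Pow B. c D * (\<Prod>p\<in>D. g p))"

text \<open>For squarefree \<open>d = \<Prod>D\<close>, \<open>trunc_sign k D\<close> is Brun's truncated Moebius function
  \<open>\<mu>(d) [\<omega>(d) \<le> k]\<close>, so \<open>brun_sum k g B\<close> is the expansion of \<open>\<Prod>p\<in>B. 1 - g p\<close> cut off
  after the subsets of size \<open>k\<close>.\<close>
definition trunc_sign :: "nat \<Rightarrow> 'a set \<Rightarrow> real" where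
  "trunc_sign k D = (if card D \<le> k then (-1) ^ card D else 0)"

definition brun_sum :: "nat \<Rightarrow> ('a \<Rightarrow> real) \<Rightarrow> 'a set \<Rightarrow> real" where
  "brun_sum k = subset_sum (trunc_sign k)"

definition elem_sym :: "nat \<Rightarrow> ('a \<Rightarrow> real) \<Rightarrow> 'a set \<Rightarrow> real" where
  "elem_sym m = subset_sum (\<lambda>D. of_bool (card D = m))"

lemma subset_sum_empty [simp]: "subset_sum c g {} = c {}"
  by (simp add: subset_sum_def)

lemma subset_sum_insert:
  assumes "finite B" "q \<notin> B"
  shows "subset_sum c g (insert q B) = subset_sum c g B + g q * subset_sum (\<lambda>D. c (insert q D)) g B"
proof -
  have inj: "inj_on (insert q) (Pow B)"
    using assms(2) by (auto simp: inj_on_def)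
  have fin: "finite D" "q \<notin> D" if "D \<in> Pow B" for D
    using that assms finite_subset by auto
  have "subset_sum c g (insert q B)
      = subset_sum c g B + (\<Sum>D\<in>insert q ` Pow B. c D * (\<Prod>p\<in>D. g p))"
    unfolding subset_sum_def Pow_insert
    by (rule sum.union_disjoint) (use assms in auto)
  also have "(\<Sum>D\<in>insert q ` Pow B. c D * (\<Prod>p\<in>D. g p))
      = g q * subset_sum (\<lambda>D. c (insert q D)) g B"
    unfolding subset_sum_def sum.reindex[OF inj] sum_distrib_left
    by (intro sum.cong) (auto simp: fin)
  finally show ?thesis .
qed

lemma subset_sum_cong:
  "(\<And>D. D \<subseteq> B \<Longrightarrow> c D = c' D) \<Longrightarrow> subset_sum c g B = subset_sum c' g B"
  unfolding subset_sum_def by (intro sum.cong) auto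

lemma subset_sum_mono:
  assumes "\<And>D. D \<subseteq> B \<Longrightarrow> c D \<le> c' D" "\<And>p. p \<in> B \<Longrightarrow> 0 \<le> g p"
  shows "subset_sum c g B \<le> subset_sum c' g B"
  unfolding subset_sum_def using assms
  by (intro sum_mono mult_right_mono prod_nonneg) auto

lemma subset_sum_nonneg:
  assumes "\<And>D. D \<subseteq> B \<Longrightarrow> 0 \<le> c D" "\<And>p. p \<in> B \<Longrightarrow> 0 \<le> g p"
  shows "0 \<le> subset_sum c g B"
  using subset_sum_mono[of B "\<lambda>_. 0" c g] assms by (simp add: subset_sum_def)

lemma brun_sum_0: "finite B \<Longrightarrow> brun_sum 0 g B = 1"
proof (induction B rule: finite_induct)
  case (insert q B)
  have "subset_sum (\<lambda>D. trunc_sign 0 (insert q D)) g B = 0"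
    unfolding subset_sum_def trunc_sign_def using insert.hyps
    by (intro sum.neutral) (auto simp: card_insert_if finite_subset[OF _ insert.hyps(1)])
  then show ?case
    using insert by (simp add: brun_sum_def subset_sum_insert)
qed (simp add: brun_sum_def trunc_sign_def)

lemma brun_sum_Suc_insert:
  assumes "finite B" "q \<notin> B"
  shows "brun_sum (Suc k) g (insert q B) = brun_sum (Suc k) g B - g q * brun_sum k g B"
proof -
  have "subset_sum (\<lambda>D. trunc_sign (Suc k) (insert q D)) g B = - brun_sum k g B"
    unfolding brun_sum_def subset_sum_def trunc_sign_def sum_negf[symmetric]
    using assms by (intro sum.cong) (auto simp: card_insert_if finite_subset[OF _ assms(1)])
  then show ?thesis
    using assms by (simp add: brun_sum_def subset_sum_insert)
qed

lemma elem_sym_0: "finite B \<Longrightarrow> elem_sym 0 g B = 1"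
proof (induction B rule: finite_induct)
  case (insert q B)
  have "subset_sum (\<lambda>D. of_bool (card (insert q D) = 0)) g B = 0"
    unfolding subset_sum_def using insert.hyps
    by (intro sum.neutral) (auto simp: card_insert_if finite_subset[OF _ insert.hyps(1)])
  then show ?case
    using insert by (simp add: elem_sym_def subset_sum_insert)
qed (simp add: elem_sym_def)

lemma elem_sym_Suc_insert:
  assumes "finite B" "q \<notin> B"
  shows "elem_sym (Suc m) g (insert q B) = elem_sym (Suc m) g B + g q * elem_sym m g B"
proof -
  have "subset_sum (\<lambda>D. of_bool (card (insert q D) = Suc m)) g B = elem_sym m g B"
    unfolding elem_sym_def subset_sum_def
    using assms by (intro sum.cong) (auto simp: card_insert_if finite_subset[OF _ assms(1)])
  then show ?thesis
    using assms by (simp add: elem_sym_def subset_sum_insert)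
qed

lemma elem_sym_nonneg: "(\<And>p. p \<in> B \<Longrightarrow> 0 \<le> g p) \<Longrightarrow> 0 \<le> elem_sym m g B"
  unfolding elem_sym_def by (rule subset_sum_nonneg) auto

lemma bonferroni:
  assumes "finite B" "\<And>p. p \<in> B \<Longrightarrow> 0 \<le> g p \<and> g p \<le> 1"
  shows "0 \<le> (-1)^k * (brun_sum k g B - (\<Prod>p\<in>B. 1 - g p))
         \<and> (-1)^k * (brun_sum k g B - (\<Prod>p\<in>B. 1 - g p)) \<le> elem_sym (Suc k) g B"
  using assms
proof (induction B arbitrary: k rule: finite_induct)
  case (insert q B)
  define W where "W = (\<Prod>p\<in>B. 1 - g p)"
  have gq: "0 \<le> g q" "g q \<le> 1" and gB: "\<And>p. p \<in> B \<Longrightarrow> 0 \<le> g p \<and> g p \<le> 1"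
    using insert.prems by auto
  have W: "0 \<le> W" "W \<le> 1"
    unfolding W_def using gB by (auto intro!: prod_nonneg prod_le_1)
  have W_insert: "(\<Prod>p\<in>insert q B. 1 - g p) = (1 - g q) * W"
    unfolding W_def using insert.hyps by simp
  show ?case
  proof (cases k)
    case 0
    have "0 \<le> 1 - W" "1 - W \<le> elem_sym 1 g B"
      using insert.IH[OF gB, of 0] brun_sum_0[OF insert.hyps(1)] by (auto simp: W_def)
    moreover have "brun_sum 0 g (insert q B) - (1 - g q) * W = (1 - W) + g q * W"
      using brun_sum_0[of "insert q B" g] insert.hyps by (simp add: algebra_simps)
    moreover have "elem_sym 1 g (insert q B) = elem_sym 1 g B + g q"
      using elem_sym_Suc_insert[OF insert.hyps, of 0] elem_sym_0[OF insert.hyps(1)] by simp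
    moreover have "0 \<le> g q * W" "g q * W \<le> g q"
      using W gq by (simp_all add: mult_left_le)
    ultimately show ?thesis
      unfolding 0 W_insert by simp
  next
    case (Suc j)
    have step: "(-1)^k * (brun_sum k g (insert q B) - (1 - g q) * W)
        = (-1)^k * (brun_sum k g B - W) + g q * ((-1)^j * (brun_sum j g B - W))"
      unfolding Suc brun_sum_Suc_insert[OF insert.hyps] by (simp add: algebra_simps)
    have "0 \<le> g q * ((-1)^j * (brun_sum j g B - W))"
      "g q * ((-1)^j * (brun_sum j g B - W)) \<le> g q * elem_sym k g B"
      using insert.IH[OF gB, of j] gq unfolding Suc W_def by (auto intro: mult_left_mono)
    moreover have "0 \<le> (-1)^k * (brun_sum k g B - W)"
      "(-1)^k * (brun_sum k g B - W) \<le> elem_sym (Suc k) g B"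
      using insert.IH[OF gB, of k] by (auto simp: W_def)
    ultimately show ?thesis
      unfolding W_insert step elem_sym_Suc_insert[OF insert.hyps] by linarith
  qed
qed (simp_all add: brun_sum_def trunc_sign_def elem_sym_def)

corollary bonferroni_even:
  assumes "finite B" "\<And>p. p \<in> B \<Longrightarrow> 0 \<le> g p \<and> g p \<le> 1" "even k"
  shows "(\<Prod>p\<in>B. 1 - g p) \<le> brun_sum k g B"
    and "brun_sum k g B \<le> (\<Prod>p\<in>B. 1 - g p) + elem_sym (Suc k) g B"
  using bonferroni[of B g k] assms by auto

lemma power_Suc_add_ge_two_terms:
  fixes s t :: real
  assumes "0 \<le> s" "0 \<le> t"
  shows "s ^ Suc n + real (Suc n) * t * s ^ n \<le> (s + t) ^ Suc n"
proof (induction n)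
  case (Suc n)
  have "s ^ Suc (Suc n) + real (Suc (Suc n)) * t * s ^ Suc n
      \<le> (s + t) * (s ^ Suc n + real (Suc n) * t * s ^ n)"
    using assms by (simp add: algebra_simps)
  also have "\<dots> \<le> (s + t) * (s + t) ^ Suc n"
    using Suc assms by (intro mult_left_mono) auto
  finally show ?case by simp
qed simp

lemma elem_sym_le:
  assumes "finite B" "\<And>p. p \<in> B \<Longrightarrow> 0 \<le> g p"
  shows "elem_sym m g B \<le> (\<Sum>p\<in>B. g p) ^ m / fact m"
  using assms
proof (induction B arbitrary: m rule: finite_induct)
  case empty
  then show ?case by (cases m) (auto simp: elem_sym_def)
next
  case (insert q B)
  define s where "s = (\<Sum>p\<in>B. g p)"
  have gB: "\<And>p. p \<in> B \<Longrightarrow> 0 \<le> g p" and gq: "0 \<le> g q"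
    using insert.prems by auto
  have s: "0 \<le> s"
    unfolding s_def using gB by (auto intro: sum_nonneg)
  show ?case
  proof (cases m)
    case 0
    then show ?thesis using elem_sym_0[of "insert q B"] insert.hyps by simp
  next
    case (Suc n)
    have "elem_sym (Suc n) g (insert q B) \<le> s ^ Suc n / fact (Suc n) + g q * (s ^ n / fact n)"
      unfolding elem_sym_Suc_insert[OF insert.hyps] s_def
      using insert.IH[OF gB, of "Suc n"] insert.IH[OF gB, of n] gq
      by (intro add_mono mult_left_mono) auto
    also have "\<dots> = (s ^ Suc n + real (Suc n) * g q * s ^ n) / fact (Suc n)"
      by (simp add: field_simps del: of_nat_Suc)
    also have "\<dots> \<le> (s + g q) ^ Suc n / fact (Suc n)"
      by (intro divide_right_mono power_Suc_add_ge_two_terms s gq) simp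
    finally show ?thesis
      using insert.hyps by (simp add: Suc s_def add.commute)
  qed
qed

lemma subset_sum_card_le_power:
  assumes "finite B"
  shows "subset_sum (\<lambda>D. of_bool (card D \<le> k)) (\<lambda>_. 1) B \<le> (real (card B) + 1) ^ k"
  using assms
proof (induction B arbitrary: k rule: finite_induct)
  case (insert q B)
  define n where "n = real (card B) + 1"
  have n: "1 \<le> n"
    unfolding n_def by simp
  have shift: "subset_sum (\<lambda>D. of_bool (card (insert q D) \<le> k)) (\<lambda>_. 1) B
      = subset_sum (\<lambda>D. of_bool (card D \<le> k - 1 \<and> 0 < k)) (\<lambda>_. 1) B"
    unfolding subset_sum_def using insert.hyps
    by (intro sum.cong) (auto simp: card_insert_if finite_subset[OF _ insert.hyps(1)])
  have rec: "subset_sum (\<lambda>D. of_bool (card D \<le> k)) (\<lambda>_. 1) (insert q B)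
      = subset_sum (\<lambda>D. of_bool (card D \<le> k)) (\<lambda>_. 1) B
        + subset_sum (\<lambda>D. of_bool (card D \<le> k - 1 \<and> 0 < k)) (\<lambda>_. 1) B"
    using subset_sum_insert[OF insert.hyps] shift by simp
  show ?case
  proof (cases k)
    case 0
    then show ?thesis
      using insert.IH[of 0] unfolding rec by (simp add: subset_sum_def)
  next
    case (Suc j)
    have "subset_sum (\<lambda>D. of_bool (card D \<le> k)) (\<lambda>_. 1) (insert q B) \<le> n ^ Suc j + n ^ j"
      unfolding rec unfolding Suc n_def
      using insert.IH[of "Suc j"] insert.IH[of j] by simp
    also have "\<dots> \<le> n ^ Suc j + real (Suc j) * 1 * n ^ j"
      using n by (intro add_left_mono) auto
    also have "\<dots> \<le> (n + 1) ^ Suc j"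
      using n by (intro power_Suc_add_ge_two_terms) auto
    finally show ?thesis
      using insert.hyps by (simp add: Suc n_def)
  qed
qed (simp add: subset_sum_def)

section \<open>Counting multiples in intervals\<close>

definition ints_in :: "real \<Rightarrow> real \<Rightarrow> int set" where
  "ints_in x y = {n. x < real_of_int n \<and> real_of_int n \<le> x + y}"

definition dvd_ind :: "int \<Rightarrow> nat \<Rightarrow> real" where
  "dvd_ind n p = of_bool (int p dvd n)"

definition sift_count :: "real \<Rightarrow> real \<Rightarrow> nat set \<Rightarrow> nat" where
  "sift_count x y P = card {n \<in> ints_in x y. \<forall>p\<in>P. \<not> int p dvd n}"

lemma ints_in_eq_interval: "ints_in x y = {\<lfloor>x\<rfloor> + 1 .. \<lfloor>x + y\<rfloor>}"
  unfolding ints_in_def by (auto simp flip: floor_less_iff le_floor_iff)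

lemma finite_ints_in [simp]: "finite (ints_in x y)"
  unfolding ints_in_eq_interval by simp

lemma card_ints_in: "0 \<le> y \<Longrightarrow> real (card (ints_in x y)) = of_int \<lfloor>x + y\<rfloor> - of_int \<lfloor>x\<rfloor>"
  unfolding ints_in_eq_interval by (simp add: floor_mono)

lemma card_ints_in_le:
  assumes "0 \<le> y"
  shows "real (card (ints_in x y)) \<le> y + 1"
  using card_ints_in[OF assms, of x] floor_correct[of x] floor_correct[of "x + y"] by linarith

lemma card_multiples_in_ints_in:
  fixes d :: int
  assumes "0 < d" "0 \<le> y"
  shows "\<bar>real (card {n \<in> ints_in x y. d dvd n}) - y / d\<bar> \<le> 1"
proof -
  have "{n \<in> ints_in x y. d dvd n} = (\<lambda>k. d * k) ` ints_in (x / d) (y / d)"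
    using assms(1) unfolding ints_in_def
    by (auto simp: field_simps elim!: dvdE intro!: image_eqI)
  moreover have "inj_on (\<lambda>k. d * k) A" for A
    using assms(1) by (auto simp: inj_on_def)
  ultimately have "real (card {n \<in> ints_in x y. d dvd n})
      = of_int \<lfloor>x / d + y / d\<rfloor> - of_int \<lfloor>x / d\<rfloor>"
    using assms by (simp add: card_image card_ints_in)
  then show ?thesis
    unfolding abs_le_iff using floor_correct[of "x / d"] floor_correct[of "x / d + y / d"] by linarith
qed

lemma int_prod_primes_dvd_iff:
  assumes "finite U" "\<And>p. p \<in> U \<Longrightarrow> prime p"
  shows "(\<Prod>p\<in>U. int p) dvd n \<longleftrightarrow> (\<forall>p\<in>U. int p dvd n)"
  using assms
proof (induction U rule: finite_induct)
  case (insert q U)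
  have "\<not> q dvd p" if "p \<in> U" for p
    using that insert.prems insert.hyps primes_dvd_imp_eq[of q p] by auto
  then have "\<not> int q dvd (\<Prod>p\<in>U. int p)"
    using insert.prems insert.hyps by (simp add: prime_dvd_prod_iff flip: of_nat_prod)
  then have "coprime (int q) (\<Prod>p\<in>U. int p)"
    using insert.prems by (intro prime_imp_coprime) auto
  then show ?case
    using insert by (auto simp: divides_mult dest: dvd_mult_left dvd_mult_right)
qed simp

lemma prod_dvd_ind:
  assumes "finite D" "\<And>p. p \<in> D \<Longrightarrow> prime p"
  shows "(\<Prod>p\<in>D. dvd_ind n p) = of_bool ((\<Prod>p\<in>D. int p) dvd n)"
  using int_prod_primes_dvd_iff[OF assms, of n] assms(1)
  by (cases "\<forall>p\<in>D. int p dvd n") (auto simp: dvd_ind_def intro: prod_zero)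

text \<open>Each \<open>D \<subseteq> B\<close> contributes the number of multiples of \<open>\<Prod>D\<close> in the interval, which is
  \<open>y / \<Prod>D\<close> up to an error of 1.\<close>
lemma sum_subset_sum_dvd_ind:
  assumes "finite B" "\<And>p. p \<in> B \<Longrightarrow> prime p" "0 \<le> y"
  shows "\<bar>(\<Sum>n\<in>ints_in x y. subset_sum c (dvd_ind n) B) - y * subset_sum c (\<lambda>p. 1 / real p) B\<bar>
         \<le> subset_sum (\<lambda>D. \<bar>c D\<bar>) (\<lambda>_. 1) B"
proof -
  have count: "\<bar>(\<Sum>n\<in>ints_in x y. \<Prod>p\<in>D. dvd_ind n p) - y * (\<Prod>p\<in>D. 1 / real p)\<bar> \<le> 1"
    if "D \<subseteq> B" for D
  proof -
    have D: "finite D" "\<And>p. p \<in> D \<Longrightarrow> prime p"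
      using that assms finite_subset by auto
    then have "0 < (\<Prod>p\<in>D. int p)"
      by (simp add: prime_gt_0_nat prod_pos)
    moreover have "(\<Sum>n\<in>ints_in x y. \<Prod>p\<in>D. dvd_ind n p)
        = real (card {n \<in> ints_in x y. (\<Prod>p\<in>D. int p) dvd n})"
      by (simp add: prod_dvd_ind[OF D] of_bool_def sum.If_cases Int_def)
    moreover have "y * (\<Prod>p\<in>D. 1 / real p) = y / real_of_int (\<Prod>p\<in>D. int p)"
      by (simp add: prod_dividef)
    ultimately show ?thesis
      using card_multiples_in_ints_in[of "\<Prod>p\<in>D. int p" y x] assms(3) by simp
  qed
  have "(\<Sum>n\<in>ints_in x y. subset_sum c (dvd_ind n) B) - y * subset_sum c (\<lambda>p. 1 / real p) B
      = (\<Sum>D\<in>Pow B. c D * ((\<Sum>n\<in>ints_in x y. \<Prod>p\<in>D. dvd_ind n p) - y * (\<Prod>p\<in>D. 1 / real p)))"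
    unfolding subset_sum_def
    by (simp add: sum.swap[of _ "ints_in x y"] sum_distrib_left sum_subtractf right_diff_distrib mult_ac)
  also have "\<bar>\<dots>\<bar> \<le> (\<Sum>D\<in>Pow B. \<bar>c D\<bar> * 1)"
    using count by (intro order_trans[OF sum_abs] sum_mono) (auto simp: abs_mult intro!: mult_left_le)
  finally show ?thesis
    by (simp add: subset_sum_def)
qed

lemma subset_sum_mult_disjoint:
  assumes "finite A" "finite B" "A \<inter> B = {}"
  shows "subset_sum c g A * subset_sum c' g B = subset_sum (\<lambda>D. c (D \<inter> A) * c' (D \<inter> B)) g (A \<union> B)"
proof -
  have "subset_sum c g A * subset_sum c' g B
      = (\<Sum>(D1, D2)\<in>Pow A \<times> Pow B. c D1 * c' D2 * (\<Prod>p\<in>D1 \<union> D2. g p))"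
    unfolding subset_sum_def sum_product sum.cartesian_product
  proof (intro sum.cong refl, clarify)
    fix D1 D2 assume "D1 \<subseteq> A" "D2 \<subseteq> B"
    then have "(\<Prod>p\<in>D1 \<union> D2. g p) = (\<Prod>p\<in>D1. g p) * (\<Prod>p\<in>D2. g p)"
      using assms by (intro prod.union_disjoint) (auto dest: finite_subset)
    then show "c D1 * (\<Prod>p\<in>D1. g p) * (c' D2 * (\<Prod>p\<in>D2. g p)) = c D1 * c' D2 * (\<Prod>p\<in>D1 \<union> D2. g p)"
      by simp
  qed
  also have "\<dots> = subset_sum (\<lambda>D. c (D \<inter> A) * c' (D \<inter> B)) g (A \<union> B)"
  proof -
    have split: "(D1 \<union> D2) \<inter> A = D1" "(D1 \<union> D2) \<inter> B = D2" if "D1 \<subseteq> A" "D2 \<subseteq> B" for D1 D2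
      using that assms(3) by blast+
    show ?thesis
      unfolding subset_sum_def
      by (rule sum.reindex_bij_witness[where i = "\<lambda>D. (D \<inter> A, D \<inter> B)" and j = "\<lambda>(D1, D2). D1 \<union> D2"])
         (use assms(3) in \<open>auto simp: split\<close>)
  qed
  finally show ?thesis .
qed

lemma prod_subset_sum:
  assumes "finite J" "\<And>j. j \<in> J \<Longrightarrow> finite (B j)" "disjoint_family_on B J"
  shows "(\<Prod>j\<in>J. subset_sum (c j) g (B j)) = subset_sum (\<lambda>D. \<Prod>j\<in>J. c j (D \<inter> B j)) g (\<Union>j\<in>J. B j)"
  using assms
proof (induction J rule: finite_induct)
  case (insert i J)
  have disj: "B i \<inter> (\<Union>j\<in>J. B j) = {}"
    using insert.prems(2) insert.hyps(2) by (auto simp: disjoint_family_on_def)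
  have "(\<Prod>j\<in>insert i J. subset_sum (c j) g (B j))
      = subset_sum (c i) g (B i) * subset_sum (\<lambda>D. \<Prod>j\<in>J. c j (D \<inter> B j)) g (\<Union>j\<in>J. B j)"
    using insert by (simp add: disjoint_family_on_mono[of J "insert i J"] subset_insertI)
  also have "\<dots> = subset_sum (\<lambda>D. c i (D \<inter> B i) * (\<Prod>j\<in>J. c j (D \<inter> (\<Union>j\<in>J. B j) \<inter> B j))) g
                     (B i \<union> (\<Union>j\<in>J. B j))"
    using insert.hyps insert.prems disj by (intro subset_sum_mult_disjoint) auto
  also have "\<dots> = subset_sum (\<lambda>D. \<Prod>j\<in>insert i J. c j (D \<inter> B j)) g (B i \<union> (\<Union>j\<in>J. B j))"
  proof (rule subset_sum_cong)
    fix D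
    have "D \<inter> (\<Union>j\<in>J. B j) \<inter> B j = D \<inter> B j" if "j \<in> J" for j
      using that by blast
    then show "c i (D \<inter> B i) * (\<Prod>j\<in>J. c j (D \<inter> (\<Union>j\<in>J. B j) \<inter> B j))
        = (\<Prod>j\<in>insert i J. c j (D \<inter> B j))"
      using insert.hyps by simp
  qed
  finally show ?case by simp
qed (simp add: subset_sum_def)

lemma sift_count_eq_sum:
  assumes "finite P"
  shows "real (sift_count x y P) = (\<Sum>n\<in>ints_in x y. \<Prod>p\<in>P. 1 - dvd_ind n p)"
proof -
  have "(\<Prod>p\<in>P. 1 - dvd_ind n p) = of_bool (\<forall>p\<in>P. \<not> int p dvd n)" for n
    using assms by (cases "\<forall>p\<in>P. \<not> int p dvd n") (auto simp: dvd_ind_def intro: prod_zero)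
  then show ?thesis
    by (simp add: sift_count_def of_bool_def sum.If_cases Int_def)
qed

lemma coprime_prod_primes_iff:
  assumes "finite P" "\<And>p. p \<in> P \<Longrightarrow> prime p"
  shows "coprime n (\<Prod>p\<in>P. int p) \<longleftrightarrow> (\<forall>p\<in>P. \<not> int p dvd n)"
proof
  assume "coprime n (\<Prod>p\<in>P. int p)"
  then show "\<forall>p\<in>P. \<not> int p dvd n"
    using assms by (metis coprime_common_divisor dvd_prodI not_prime_unit prime_nat_int_transfer)
next
  assume "\<forall>p\<in>P. \<not> int p dvd n"
  then have "coprime (int p) n" if "p \<in> P" for p
    using assms that by (intro prime_imp_coprime) auto
  then show "coprime n (\<Prod>p\<in>P. int p)"
    by (intro prod_coprime_right) (simp add: coprime_commute)
qed

lemma sieve_S_eq_sift_count: "sieve_S x y z = sift_count x y {p. prime p \<and> real p \<le> z}"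
proof -
  have "finite {p. prime p \<and> real p \<le> z}"
    by (rule finite_subset[of _ "{..nat \<lfloor>z\<rfloor>}"]) (auto simp: le_nat_floor)
  then have "coprime n (primorial_P z) \<longleftrightarrow> (\<forall>p\<in>{p. prime p \<and> real p \<le> z}. \<not> int p dvd n)" for n
    unfolding primorial_P_def by (rule coprime_prod_primes_iff) auto
  then show ?thesis
    unfolding sieve_S_def sift_count_def ints_in_def by (simp add: conj_assoc)
qed

lemma subset_sum_abs_le_card_power:
  assumes "finite B" "\<And>D. D \<subseteq> B \<Longrightarrow> \<bar>c D\<bar> \<le> of_bool (card D \<le> m)"
  shows "subset_sum (\<lambda>D. \<bar>c D\<bar>) (\<lambda>_. 1) B \<le> (real (card B) + 1) ^ m"
  using subset_sum_mono[of B "\<lambda>D. \<bar>c D\<bar>" "\<lambda>D. of_bool (card D \<le> m)" "\<lambda>_. 1"]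
    subset_sum_card_le_power[OF assms(1), of m] assms(2) by simp

section \<open>Brun's sieve on blocks of primes\<close>

lemma prod_diff_le_sum:
  fixes a c e :: "'i \<Rightarrow> real"
  assumes "finite I" "\<And>j. j \<in> I \<Longrightarrow> 0 \<le> a j \<and> a j \<le> c j \<and> c j - a j \<le> e j"
  shows "(\<Prod>j\<in>I. c j) - (\<Prod>j\<in>I. a j) \<le> (\<Sum>i\<in>I. e i * (\<Prod>j\<in>I - {i}. c j))"
  using assms
proof (induction I rule: finite_induct)
  case (insert i0 I)
  have i0: "0 \<le> a i0" "a i0 \<le> c i0" "c i0 - a i0 \<le> e i0"
    and hI: "\<And>j. j \<in> I \<Longrightarrow> 0 \<le> a j \<and> a j \<le> c j \<and> c j - a j \<le> e j"
    using insert.prems by auto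
  have a: "0 \<le> (\<Prod>j\<in>I. a j)" "(\<Prod>j\<in>I. a j) \<le> (\<Prod>j\<in>I. c j)"
    using hI by (auto intro: prod_nonneg prod_mono)
  have "(\<Prod>j\<in>insert i0 I. c j) - (\<Prod>j\<in>insert i0 I. a j)
      = c i0 * ((\<Prod>j\<in>I. c j) - (\<Prod>j\<in>I. a j)) + (c i0 - a i0) * (\<Prod>j\<in>I. a j)"
    using insert.hyps by (simp add: algebra_simps)
  also have "\<dots> \<le> c i0 * (\<Sum>i\<in>I. e i * (\<Prod>j\<in>I - {i}. c j)) + e i0 * (\<Prod>j\<in>I. c j)"
    using insert.IH[OF hI] i0 a by (intro add_mono mult_left_mono mult_mono) auto
  also have "\<dots> = (\<Sum>i\<in>insert i0 I. e i * (\<Prod>j\<in>insert i0 I - {i}. c j))"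
  proof -
    have "insert i0 I - {i} = insert i0 (I - {i})" if "i \<in> I" for i
      using that insert.hyps by auto
    then have "(\<Prod>j\<in>insert i0 I - {i}. c j) = c i0 * (\<Prod>j\<in>I - {i}. c j)" if "i \<in> I" for i
      using that insert.hyps by simp
    then show ?thesis
      using insert.hyps by (simp add: sum_distrib_left mult_ac)
  qed
  finally show ?case .
qed simp

lemma prod_le_prod_exp_sum:
  fixes w t :: "'i \<Rightarrow> real"
  assumes "finite I" "\<And>j. j \<in> I \<Longrightarrow> 0 < w j \<and> w j \<le> t j \<and> t j \<le> w j + e j"
  shows "(\<Prod>j\<in>I. t j) \<le> (\<Prod>j\<in>I. w j) * exp (\<Sum>j\<in>I. e j / w j)"
proof -
  have "t j \<le> w j * exp (e j / w j)" if "j \<in> I" for j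
  proof -
    have "w j * (1 + e j / w j) = w j + e j"
      using assms(2)[OF that] by (simp add: field_simps)
    then have "t j \<le> w j * (1 + e j / w j)"
      using assms(2)[OF that] by linarith
    also have "\<dots> \<le> w j * exp (e j / w j)"
      using assms(2)[OF that] by (intro mult_left_mono) (auto simp: add.commute)
    finally show ?thesis .
  qed
  then have "(\<Prod>j\<in>I. t j) \<le> (\<Prod>j\<in>I. w j * exp (e j / w j))"
    using assms(2) by (intro prod_mono) force
  also have "\<dots> = (\<Prod>j\<in>I. w j) * exp (\<Sum>j\<in>I. e j / w j)"
    by (simp add: prod.distrib exp_sum[OF assms(1)])
  finally show ?thesis .
qed

lemma prod_relative_error_bounds:
  fixes w t e :: "'i \<Rightarrow> real"
  assumes "finite I" "\<And>j. j \<in> I \<Longrightarrow> 0 < w j \<and> w j \<le> t j \<and> t j \<le> w j + e j"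
    and "(\<Sum>j\<in>I. e j / w j) \<le> \<delta>"
  shows "(\<Prod>j\<in>I. t j) \<le> (\<Prod>j\<in>I. w j) * exp \<delta>"
    and "(\<Sum>i\<in>I. e i * (\<Prod>j\<in>I - {i}. t j)) \<le> (\<Prod>j\<in>I. w j) * (\<delta> * exp \<delta>)"
proof -
  have ratio: "0 \<le> e j / w j" if "j \<in> I" for j
    using assms(2)[OF that] by simp
  have W: "0 \<le> (\<Prod>j\<in>I'. w j)" if "I' \<subseteq> I" for I'
    using that assms(2) by (intro prod_nonneg) force
  have bound: "(\<Prod>j\<in>I'. t j) \<le> (\<Prod>j\<in>I'. w j) * exp \<delta>" if "I' \<subseteq> I" for I'
  proof -
    have "(\<Sum>j\<in>I'. e j / w j) \<le> (\<Sum>j\<in>I. e j / w j)"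
      using that ratio assms(1) by (intro sum_mono2) auto
    then have "(\<Sum>j\<in>I'. e j / w j) \<le> \<delta>"
      using assms(3) by linarith
    then show ?thesis
      using prod_le_prod_exp_sum[of I' w t e] that assms(1,2) W[OF that] finite_subset
      by (meson exp_le_cancel_iff mult_left_mono order_trans subsetD)
  qed
  show "(\<Prod>j\<in>I. t j) \<le> (\<Prod>j\<in>I. w j) * exp \<delta>"
    using bound by simp
  have "(\<Sum>i\<in>I. e i * (\<Prod>j\<in>I - {i}. t j)) \<le> (\<Sum>i\<in>I. e i / w i * ((\<Prod>j\<in>I. w j) * exp \<delta>))"
  proof (rule sum_mono)
    fix i assume i: "i \<in> I"
    have "e i * (\<Prod>j\<in>I - {i}. t j) \<le> e i / w i * w i * ((\<Prod>j\<in>I - {i}. w j) * exp \<delta>)"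
      using assms(2)[OF i] bound[of "I - {i}"] ratio[OF i] by (simp add: mult_left_mono)
    also have "\<dots> = e i / w i * ((\<Prod>j\<in>I. w j) * exp \<delta>)"
      using prod.remove[OF assms(1) i, of w] by simp
    finally show "e i * (\<Prod>j\<in>I - {i}. t j) \<le> e i / w i * ((\<Prod>j\<in>I. w j) * exp \<delta>)" .
  qed
  also have "\<dots> \<le> \<delta> * ((\<Prod>j\<in>I. w j) * exp \<delta>)"
    unfolding sum_distrib_right[symmetric] using assms(3) W[of I] by (intro mult_right_mono) auto
  finally show "(\<Sum>i\<in>I. e i * (\<Prod>j\<in>I - {i}. t j)) \<le> (\<Prod>j\<in>I. w j) * (\<delta> * exp \<delta>)"
    by (simp add: mult_ac)
qed

locale prime_blocks =
  fixes J :: "'i set" and B :: "'i \<Rightarrow> nat set"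
  assumes finite_index: "finite J"
    and finite_block: "j \<in> J \<Longrightarrow> finite (B j)"
    and prime_in_block: "j \<in> J \<Longrightarrow> p \<in> B j \<Longrightarrow> prime p"
    and disjoint_blocks: "disjoint_family_on B J"
begin

lemma prod_over_blocks:
  "(\<Prod>p\<in>(\<Union>j\<in>J. B j). f p) = (\<Prod>j\<in>J. \<Prod>p\<in>B j. f p)"
  using finite_index finite_block disjoint_blocks
  by (intro prod.UNION_disjoint) (auto simp: disjoint_family_on_def)

lemma sum_prod_subset_sum_dvd_ind:
  assumes "0 \<le> y"
  shows "\<bar>(\<Sum>n\<in>ints_in x y. \<Prod>j\<in>J. subset_sum (c j) (dvd_ind n) (B j))
           - y * (\<Prod>j\<in>J. subset_sum (c j) (\<lambda>p. 1 / real p) (B j))\<bar>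
         \<le> (\<Prod>j\<in>J. subset_sum (\<lambda>D. \<bar>c j D\<bar>) (\<lambda>_. 1) (B j))"
proof -
  note expand = prod_subset_sum[OF finite_index finite_block disjoint_blocks]
  define C where "C = (\<lambda>D. \<Prod>j\<in>J. c j (D \<inter> B j))"
  have "(\<Prod>j\<in>J. subset_sum (\<lambda>D. \<bar>c j D\<bar>) (\<lambda>_. 1) (B j))
      = subset_sum (\<lambda>D. \<bar>C D\<bar>) (\<lambda>_. 1) (\<Union>j\<in>J. B j)"
    using expand[of "\<lambda>j D. \<bar>c j D\<bar>" "\<lambda>_. 1"] by (simp add: C_def abs_prod)
  moreover have "(\<Prod>j\<in>J. subset_sum (c j) g (B j)) = subset_sum C g (\<Union>j\<in>J. B j)" for g
    using expand[of c g] by (simp add: C_def)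
  moreover have "\<bar>(\<Sum>n\<in>ints_in x y. subset_sum C (dvd_ind n) (\<Union>j\<in>J. B j))
        - y * subset_sum C (\<lambda>p. 1 / real p) (\<Union>j\<in>J. B j)\<bar>
      \<le> subset_sum (\<lambda>D. \<bar>C D\<bar>) (\<lambda>_. 1) (\<Union>j\<in>J. B j)"
    using finite_index finite_block prime_in_block assms by (intro sum_subset_sum_dvd_ind) auto
  ultimately show ?thesis
    by simp
qed

lemma prod_subset_sum_abs_le:
  assumes "\<And>j D. j \<in> J \<Longrightarrow> D \<subseteq> B j \<Longrightarrow> \<bar>c j D\<bar> \<le> of_bool (card D \<le> Suc (k j))"
  shows "(\<Prod>j\<in>J. subset_sum (\<lambda>D. \<bar>c j D\<bar>) (\<lambda>_. 1) (B j))
         \<le> (\<Prod>j\<in>J. (real (card (B j)) + 1) ^ Suc (k j))"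
  using assms finite_block
  by (intro prod_mono conjI subset_sum_abs_le_card_power subset_sum_nonneg) auto

lemma sift_count_eq_sum_blocks:
  "real (sift_count x y (\<Union>j\<in>J. B j)) = (\<Sum>n\<in>ints_in x y. \<Prod>j\<in>J. \<Prod>p\<in>B j. 1 - dvd_ind n p)"
  using finite_index finite_block by (simp add: sift_count_eq_sum prod_over_blocks)

lemma prod_brun_sum_bounds:
  assumes "\<And>j. j \<in> J \<Longrightarrow> even (k j)" "\<And>p. 0 \<le> f p \<and> f p \<le> 1"
  shows "(\<Prod>j\<in>J. \<Prod>p\<in>B j. 1 - f p) \<le> (\<Prod>j\<in>J. brun_sum (k j) f (B j))"
    and "(\<Prod>j\<in>J. brun_sum (k j) f (B j))
           - (\<Sum>i\<in>J. elem_sym (Suc (k i)) f (B i) * (\<Prod>j\<in>J - {i}. brun_sum (k j) f (B j)))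
         \<le> (\<Prod>j\<in>J. \<Prod>p\<in>B j. 1 - f p)"
proof -
  have "0 \<le> (\<Prod>p\<in>B j. 1 - f p)
        \<and> (\<Prod>p\<in>B j. 1 - f p) \<le> brun_sum (k j) f (B j)
        \<and> brun_sum (k j) f (B j) - (\<Prod>p\<in>B j. 1 - f p) \<le> elem_sym (Suc (k j)) f (B j)"
    if "j \<in> J" for j
    using bonferroni_even[of "B j" f "k j"] assms finite_block[OF that] that
    by (auto intro: prod_nonneg)
  then show "(\<Prod>j\<in>J. \<Prod>p\<in>B j. 1 - f p) \<le> (\<Prod>j\<in>J. brun_sum (k j) f (B j))"
    and "(\<Prod>j\<in>J. brun_sum (k j) f (B j))
           - (\<Sum>i\<in>J. elem_sym (Suc (k i)) f (B i) * (\<Prod>j\<in>J - {i}. brun_sum (k j) f (B j)))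
         \<le> (\<Prod>j\<in>J. \<Prod>p\<in>B j. 1 - f p)"
    using prod_diff_le_sum[OF finite_index, of "\<lambda>j. \<Prod>p\<in>B j. 1 - f p"
        "\<lambda>j. brun_sum (k j) f (B j)" "\<lambda>j. elem_sym (Suc (k j)) f (B j)"]
    by (auto intro: prod_mono)
qed

lemma prod_elem_sym_brun_sum:
  assumes "i \<in> J"
  shows "(\<Prod>j\<in>J. subset_sum (if j = i then (\<lambda>D. of_bool (card D = Suc (k i))) else trunc_sign (k j)) f (B j))
         = elem_sym (Suc (k i)) f (B i) * (\<Prod>j\<in>J - {i}. brun_sum (k j) f (B j))"
proof -
  have "(\<Prod>j\<in>J - {i}. subset_sum (if j = i then (\<lambda>D. of_bool (card D = Suc (k i))) else trunc_sign (k j)) f (B j))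
      = (\<Prod>j\<in>J - {i}. brun_sum (k j) f (B j))"
    by (intro prod.cong) (auto simp: brun_sum_def)
  then show ?thesis
    using prod.remove[OF finite_index assms, of "\<lambda>j. subset_sum (if j = i
      then (\<lambda>D. of_bool (card D = Suc (k i))) else trunc_sign (k j)) f (B j)"]
    by (simp add: elem_sym_def)
qed

lemma sift_count_le_brun:
  assumes "\<And>j. j \<in> J \<Longrightarrow> even (k j)" "0 \<le> y"
  shows "real (sift_count x y (\<Union>j\<in>J. B j))
         \<le> y * (\<Prod>j\<in>J. brun_sum (k j) (\<lambda>p. 1 / real p) (B j))
           + (\<Prod>j\<in>J. (real (card (B j)) + 1) ^ Suc (k j))"
proof -
  have "real (sift_count x y (\<Union>j\<in>J. B j)) \<le> (\<Sum>n\<in>ints_in x y. \<Prod>j\<in>J. brun_sum (k j) (dvd_ind n) (B j))"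
    unfolding sift_count_eq_sum_blocks
    by (intro sum_mono prod_brun_sum_bounds(1)) (use assms(1) in \<open>auto simp: dvd_ind_def\<close>)
  also have "\<dots> \<le> y * (\<Prod>j\<in>J. brun_sum (k j) (\<lambda>p. 1 / real p) (B j))
                  + (\<Prod>j\<in>J. subset_sum (\<lambda>D. \<bar>trunc_sign (k j) D\<bar>) (\<lambda>_. 1) (B j))"
    using sum_prod_subset_sum_dvd_ind[OF assms(2), of "\<lambda>j. trunc_sign (k j)" x]
    unfolding brun_sum_def by linarith
  also have "(\<Prod>j\<in>J. subset_sum (\<lambda>D. \<bar>trunc_sign (k j) D\<bar>) (\<lambda>_. 1) (B j))
      \<le> (\<Prod>j\<in>J. (real (card (B j)) + 1) ^ Suc (k j))"
    by (rule prod_subset_sum_abs_le) (simp add: trunc_sign_def)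
  finally show ?thesis by simp
qed

lemma sift_count_ge_brun:
  assumes "\<And>j. j \<in> J \<Longrightarrow> even (k j)" "0 \<le> y"
  defines "T \<equiv> \<lambda>f j. brun_sum (k j) f (B j)" and "E \<equiv> \<lambda>f j. elem_sym (Suc (k j)) f (B j)"
    and "R \<equiv> (\<Prod>j\<in>J. (real (card (B j)) + 1) ^ Suc (k j))"
  shows "y * (\<Prod>j\<in>J. T (\<lambda>p. 1 / real p) j)
           - y * (\<Sum>i\<in>J. E (\<lambda>p. 1 / real p) i * (\<Prod>j\<in>J - {i}. T (\<lambda>p. 1 / real p) j))
           - real (card J + 1) * R
         \<le> real (sift_count x y (\<Union>j\<in>J. B j))"
proof -
  define mixed where "mixed i j = (if j = i then (\<lambda>D::nat set. of_bool (card D = Suc (k i)))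
    else trunc_sign (k j))" for i j
  have "(\<Prod>j\<in>J. subset_sum (\<lambda>D. \<bar>trunc_sign (k j) D\<bar>) (\<lambda>_. 1) (B j)) \<le> R"
    unfolding R_def by (rule prod_subset_sum_abs_le) (simp add: trunc_sign_def)
  then have main: "y * (\<Prod>j\<in>J. T (\<lambda>p. 1 / real p) j) - R \<le> (\<Sum>n\<in>ints_in x y. \<Prod>j\<in>J. T (dvd_ind n) j)"
    using sum_prod_subset_sum_dvd_ind[OF assms(2), of "\<lambda>j. trunc_sign (k j)" x]
    unfolding T_def brun_sum_def abs_le_iff by linarith
  have err: "(\<Sum>n\<in>ints_in x y. E (dvd_ind n) i * (\<Prod>j\<in>J - {i}. T (dvd_ind n) j))
      \<le> y * (E (\<lambda>p. 1 / real p) i * (\<Prod>j\<in>J - {i}. T (\<lambda>p. 1 / real p) j)) + R"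
    if "i \<in> J" for i
  proof -
    have "(\<Prod>j\<in>J. subset_sum (\<lambda>D. \<bar>mixed i j D\<bar>) (\<lambda>_. 1) (B j)) \<le> R"
      unfolding R_def by (rule prod_subset_sum_abs_le) (auto simp: mixed_def trunc_sign_def)
    then show ?thesis
      using sum_prod_subset_sum_dvd_ind[OF assms(2), of "mixed i" x]
      unfolding T_def E_def mixed_def prod_elem_sym_brun_sum[OF that] abs_le_iff by linarith
  qed
  have "(\<Sum>n\<in>ints_in x y. \<Prod>j\<in>J. T (dvd_ind n) j)
        - (\<Sum>i\<in>J. \<Sum>n\<in>ints_in x y. E (dvd_ind n) i * (\<Prod>j\<in>J - {i}. T (dvd_ind n) j))
      = (\<Sum>n\<in>ints_in x y. (\<Prod>j\<in>J. T (dvd_ind n) j)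
          - (\<Sum>i\<in>J. E (dvd_ind n) i * (\<Prod>j\<in>J - {i}. T (dvd_ind n) j)))"
    by (simp add: sum_subtractf sum.swap[of _ J])
  also have "\<dots> \<le> real (sift_count x y (\<Union>j\<in>J. B j))"
    unfolding sift_count_eq_sum_blocks T_def E_def
    by (intro sum_mono prod_brun_sum_bounds(2)) (use assms(1) in \<open>auto simp: dvd_ind_def\<close>)
  finally have "(\<Sum>n\<in>ints_in x y. \<Prod>j\<in>J. T (dvd_ind n) j)
        - (\<Sum>i\<in>J. \<Sum>n\<in>ints_in x y. E (dvd_ind n) i * (\<Prod>j\<in>J - {i}. T (dvd_ind n) j))
      \<le> real (sift_count x y (\<Union>j\<in>J. B j))" .
  moreover have "(\<Sum>i\<in>J. \<Sum>n\<in>ints_in x y. E (dvd_ind n) i * (\<Prod>j\<in>J - {i}. T (dvd_ind n) j))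
      \<le> y * (\<Sum>i\<in>J. E (\<lambda>p. 1 / real p) i * (\<Prod>j\<in>J - {i}. T (\<lambda>p. 1 / real p) j)) + real (card J) * R"
    using sum_mono[OF err] by (simp add: sum.distrib sum_distrib_left)
  ultimately show ?thesis
    using main by (simp add: algebra_simps)
qed

theorem sift_count_bounds:
  assumes "\<And>j. j \<in> J \<Longrightarrow> even (k j)" "0 \<le> y"
    and "(\<Sum>j\<in>J. elem_sym (Suc (k j)) (\<lambda>p. 1 / real p) (B j) / (\<Prod>p\<in>B j. 1 - 1 / real p)) \<le> \<delta>"
  defines "W \<equiv> (\<Prod>p\<in>(\<Union>j\<in>J. B j). 1 - 1 / real p)"
    and "R \<equiv> (\<Prod>j\<in>J. (real (card (B j)) + 1) ^ Suc (k j))"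
  shows "real (sift_count x y (\<Union>j\<in>J. B j)) \<le> y * W * exp \<delta> + R"
    and "y * W * (1 - \<delta> * exp \<delta>) - real (card J + 1) * R \<le> real (sift_count x y (\<Union>j\<in>J. B j))"
proof -
  let ?g = "\<lambda>p. 1 / real p"
  have g: "0 \<le> ?g p \<and> ?g p \<le> 1" for p
    by (cases "p = 0") auto
  have factors: "0 < (\<Prod>p\<in>B j. 1 - ?g p) \<and> (\<Prod>p\<in>B j. 1 - ?g p) \<le> brun_sum (k j) ?g (B j)
      \<and> brun_sum (k j) ?g (B j) \<le> (\<Prod>p\<in>B j. 1 - ?g p) + elem_sym (Suc (k j)) ?g (B j)"
    if "j \<in> J" for j
  proof -
    have "?g p < 1" if "p \<in> B j" for p
      using prime_gt_1_nat[OF prime_in_block[OF \<open>j \<in> J\<close> that]] by (simp add: divide_less_eq)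
    then have "0 < (\<Prod>p\<in>B j. 1 - ?g p)"
      by (intro prod_pos) simp
    then show ?thesis
      using bonferroni_even[of "B j" ?g "k j"] finite_block[OF that] assms(1)[OF that] g by auto
  qed
  have W: "W = (\<Prod>j\<in>J. \<Prod>p\<in>B j. 1 - ?g p)"
    unfolding W_def prod_over_blocks ..
  note rel = prod_relative_error_bounds[OF finite_index factors assms(3)]
  have "y * (\<Prod>j\<in>J. brun_sum (k j) ?g (B j)) \<le> y * (W * exp \<delta>)"
    unfolding W using rel(1) assms(2) by (rule mult_left_mono)
  then show "real (sift_count x y (\<Union>j\<in>J. B j)) \<le> y * W * exp \<delta> + R"
    using sift_count_le_brun[where k = k and x = x, OF assms(1,2)] unfolding R_def by simp
  have "y * W \<le> y * (\<Prod>j\<in>J. brun_sum (k j) ?g (B j))"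
    unfolding W using factors assms(2) by (intro mult_left_mono prod_mono) (auto intro: less_imp_le)
  moreover have "y * (\<Sum>i\<in>J. elem_sym (Suc (k i)) ?g (B i) * (\<Prod>j\<in>J - {i}. brun_sum (k j) ?g (B j)))
      \<le> y * (W * (\<delta> * exp \<delta>))"
    unfolding W using rel(2) assms(2) by (intro mult_left_mono) auto
  ultimately show "y * W * (1 - \<delta> * exp \<delta>) - real (card J + 1) * R \<le> real (sift_count x y (\<Union>j\<in>J. B j))"
    using sift_count_ge_brun[where k = k and x = x, OF assms(1,2)] unfolding R_def by (simp add: algebra_simps)
qed

end

section \<open>Mertens-type estimates\<close>

lemma sum_ln_prime_divisors_le:
  assumes "finite P" "\<And>p. p \<in> P \<Longrightarrow> prime p" "0 < m"
  shows "(\<Sum>p\<in>{p \<in> P. int p dvd m}. ln (real p)) \<le> ln (real_of_int m)"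
proof -
  define F where "F = {p \<in> P. int p dvd m}"
  have F: "finite F" "\<And>p. p \<in> F \<Longrightarrow> prime p"
    using assms unfolding F_def by auto
  have pos: "0 < (\<Prod>p\<in>F. real p)"
    using F by (intro prod_pos) (auto simp: prime_gt_0_nat)
  have "(\<Prod>p\<in>F. int p) dvd m"
    using int_prod_primes_dvd_iff[OF F, of m] by (simp add: F_def)
  then have "(\<Prod>p\<in>F. int p) \<le> m"
    using zdvd_imp_le assms(3) by blast
  then have "real_of_int (\<Prod>p\<in>F. int p) \<le> real_of_int m"
    by (simp only: of_int_le_iff)
  then have "(\<Prod>p\<in>F. real p) \<le> real_of_int m"
    by simp
  then have "ln (\<Prod>p\<in>F. real p) \<le> ln (real_of_int m)"
    using pos by simp
  moreover have "ln (\<Prod>p\<in>F. real p) = (\<Sum>p\<in>F. ln (real p))"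
    using F by (intro ln_prod) (auto dest: prime_gt_0_nat)
  ultimately show ?thesis
    by (simp add: F_def)
qed

text \<open>Chebyshev's argument: count the multiples of each \<open>p \<le> n\<close> among \<open>1, \<dots>, n\<close>.\<close>
lemma sum_ln_prime_div_prime_le:
  assumes "1 \<le> n"
  shows "(\<Sum>p\<in>{p. prime p \<and> p \<le> n}. ln (real p) / real p) \<le> 2 * ln (real n)"
proof -
  define P where "P = {p. prime p \<and> p \<le> n}"
  define I where "I = ints_in 0 (real n)"
  have P: "finite P" "\<And>p. p \<in> P \<Longrightarrow> prime p" "card P \<le> n"
    using card_mono[of "{1..n}" P] prime_ge_1_nat by (auto simp: P_def subset_iff)
  have ln_p: "0 \<le> ln (real p)" "ln (real p) \<le> ln (real n)" if "p \<in> P" for p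
    using that prime_gt_0_nat[OF P(2)[OF that]] by (auto simp: P_def)
  have I: "0 < m" "ln (real_of_int m) \<le> ln (real n)" if "m \<in> I" for m
    using that assms by (auto simp: I_def ints_in_def)
  have multiples: "real n / real p - 1 \<le> real (card {m \<in> I. int p dvd m})" if "p \<in> P" for p
    using card_multiples_in_ints_in[of "int p" "real n" 0] prime_gt_0_nat[OF P(2)[OF that]]
    unfolding I_def by (simp add: abs_le_iff)
  have "(\<Sum>p\<in>P. ln (real p) * (real n / real p - 1))
      \<le> (\<Sum>p\<in>P. ln (real p) * real (card {m \<in> I. int p dvd m}))"
    using ln_p multiples by (intro sum_mono mult_left_mono) auto
  also have "\<dots> = (\<Sum>p\<in>P. \<Sum>m\<in>I. if int p dvd m then ln (real p) else 0)"
    by (simp add: I_def sum.If_cases Int_def mult.commute)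
  also have "\<dots> = (\<Sum>m\<in>I. \<Sum>p\<in>{p \<in> P. int p dvd m}. ln (real p))"
    by (simp add: sum.swap[of _ P] sum.inter_filter[OF P(1)])
  also have "\<dots> \<le> (\<Sum>m\<in>I. ln (real n))"
    using sum_ln_prime_divisors_le[OF P(1,2)] I by (intro sum_mono) (meson order_trans)
  also have "\<dots> = real n * ln (real n)"
    by (simp add: I_def card_ints_in)
  finally have "real n * (\<Sum>p\<in>P. ln (real p) / real p) - (\<Sum>p\<in>P. ln (real p))
      \<le> real n * ln (real n)"
    by (simp add: right_diff_distrib sum_subtractf sum_distrib_left ac_simps)
  moreover have "(\<Sum>p\<in>P. ln (real p)) \<le> real (card P) * ln (real n)"
    using ln_p by (intro sum_bounded_above) auto
  moreover have "real (card P) * ln (real n) \<le> real n * ln (real n)"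
    using P(3) assms by (intro mult_right_mono) auto
  ultimately have "real n * (\<Sum>p\<in>P. ln (real p) / real p) \<le> real n * (2 * ln (real n))"
    by linarith
  then show ?thesis
    using assms unfolding P_def by (simp add: mult_le_cancel_left_pos)
qed

lemma sum_inverse_primes_le:
  fixes T :: nat
  assumes "2 \<le> T" "\<And>p. p \<in> B \<Longrightarrow> prime p \<and> T < p\<^sup>2 \<and> p \<le> T"
  shows "(\<Sum>p\<in>B. 1 / real p) \<le> 4"
proof -
  define P where "P = {p. prime p \<and> p \<le> T}"
  have "finite P" "B \<subseteq> P"
    using assms(2) unfolding P_def by (auto intro: finite_subset[of _ "{..T}"])
  have lnT: "0 < ln (real T)"
    using assms(1) by simp
  have "1 / real p \<le> 2 / ln (real T) * (ln (real p) / real p)" if "p \<in> B" for p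
  proof -
    have "real T < real p ^ 2"
      using assms(2)[OF that] by (metis of_nat_less_iff of_nat_power)
    moreover have "0 < real p"
      using assms(2)[OF that] prime_gt_0_nat by simp
    ultimately have "ln (real T) < ln (real p ^ 2)"
      using assms(1) by (subst ln_less_cancel_iff) auto
    then have "ln (real T) \<le> 2 * ln (real p)"
      using \<open>0 < real p\<close> by (simp add: ln_realpow)
    then have "ln (real T) / (real p * ln (real T)) \<le> 2 * ln (real p) / (real p * ln (real T))"
      using \<open>0 < real p\<close> lnT by (intro divide_right_mono) auto
    then show ?thesis
      using \<open>0 < real p\<close> lnT by (simp add: mult.commute)
  qed
  then have "(\<Sum>p\<in>B. 1 / real p) \<le> 2 / ln (real T) * (\<Sum>p\<in>B. ln (real p) / real p)"
    by (simp add: sum_distrib_left sum_mono)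
  also have "\<dots> \<le> 2 / ln (real T) * (\<Sum>p\<in>P. ln (real p) / real p)"
    using \<open>finite P\<close> \<open>B \<subseteq> P\<close> lnT by (intro mult_left_mono sum_mono2) (auto simp: P_def dest: prime_gt_0_nat)
  also have "\<dots> \<le> 2 / ln (real T) * (2 * ln (real T))"
    using sum_ln_prime_div_prime_le[of T] assms(1) lnT unfolding P_def by (intro mult_left_mono) auto
  also have "\<dots> = 4"
    using lnT by simp
  finally show ?thesis .
qed

lemma mertens_prod_ge_inverse:
  assumes "1 \<le> z"
  shows "1 / z \<le> mertens_prod z"
proof -
  define N where "N = nat \<lfloor>z\<rfloor>"
  have N: "1 \<le> N" "real N \<le> z"
    using assms unfolding N_def by linarith+
  have telescope: "(\<Prod>m\<in>{2..n}. 1 - 1 / real m) = 1 / real n" if "1 \<le> n" for n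
    using that
  proof (induction n rule: dec_induct)
    case (step n)
    then have "{2..Suc n} = insert (Suc n) {2..n}"
      by auto
    with step show ?case
      by (simp add: field_simps)
  qed simp
  define P where "P = {p. prime p \<and> real p \<le> z}"
  have "P \<subseteq> {2..N}"
    unfolding P_def N_def using prime_ge_2_nat by (auto simp: le_nat_floor)
  then have "(\<Prod>m\<in>{2..N}. 1 - 1 / real m)
      = (\<Prod>m\<in>{2..N} - P. 1 - 1 / real m) * (\<Prod>m\<in>P. 1 - 1 / real m)"
    by (intro prod.subset_diff) auto
  also have "\<dots> \<le> (\<Prod>m\<in>P. 1 - 1 / real m)"
    using \<open>P \<subseteq> {2..N}\<close> by (intro mult_left_le_one_le prod_nonneg prod_le_1) auto
  finally have "(\<Prod>m\<in>{2..N}. 1 - 1 / real m) \<le> (\<Prod>m\<in>P. 1 - 1 / real m)" .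
  then have "1 / real N \<le> mertens_prod z"
    using telescope[OF N(1)] unfolding mertens_prod_def P_def by simp
  moreover have "1 / z \<le> 1 / real N"
    using N by (intro divide_left_mono) auto
  ultimately show ?thesis
    by linarith
qed

lemma mertens_prod_pos: "1 \<le> z \<Longrightarrow> 0 < mertens_prod z"
  by (rule less_le_trans[OF _ mertens_prod_ge_inverse]) auto

lemma mertens_prod_nonneg: "0 \<le> mertens_prod z"
  unfolding mertens_prod_def by (intro prod_nonneg) (auto dest: prime_gt_1_nat)

lemma exp_neg_twice_le_one_minus:
  fixes x :: real
  assumes "0 \<le> x" "x \<le> 1/2"
  shows "exp (-2 * x) \<le> 1 - x"
proof -
  have "x * (2 * x) \<le> x * 1"
    using assms by (intro mult_left_mono) auto
  then have "1 \<le> (1 + 2 * x) * (1 - x)"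
    by (simp add: algebra_simps)
  also have "\<dots> \<le> exp (2 * x) * (1 - x)"
    using assms by (intro mult_right_mono) (auto simp: add.commute)
  finally show ?thesis
    by (simp add: exp_minus field_simps)
qed

lemma power_div_fact_le_exp:
  fixes x :: real
  assumes "0 \<le> x"
  shows "x ^ n / fact n \<le> exp x"
proof -
  have "(\<Sum>i\<in>{n}. x ^ i /\<^sub>R fact i) \<le> (\<Sum>i. x ^ i /\<^sub>R fact i)"
    using assms by (intro sum_le_suminf summable_exp_generic) auto
  then show ?thesis
    by (simp add: exp_def divide_inverse mult.commute)
qed

lemma elem_sym_div_prod_le:
  assumes "finite B" "\<And>p. p \<in> B \<Longrightarrow> prime p" "(\<Sum>p\<in>B. 1 / real p) \<le> 4"
  shows "elem_sym m (\<lambda>p. 1 / real p) B / (\<Prod>p\<in>B. 1 - 1 / real p) \<le> exp 16 / 2 ^ m"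
proof -
  let ?g = "\<lambda>p. 1 / real p"
  have g: "0 \<le> ?g p \<and> ?g p \<le> 1/2" if "p \<in> B" for p
    using prime_ge_2_nat[OF assms(2)[OF that]] by auto
  have "exp (-8) \<le> exp (-2 * (\<Sum>p\<in>B. ?g p))"
    using assms(3) by simp
  also have "\<dots> = (\<Prod>p\<in>B. exp (-2 * ?g p))"
    using assms(1) by (simp add: exp_sum[symmetric] sum_distrib_left)
  also have "\<dots> \<le> (\<Prod>p\<in>B. 1 - ?g p)"
  proof (rule prod_mono)
    fix p assume "p \<in> B"
    then show "0 \<le> exp (-2 * ?g p) \<and> exp (-2 * ?g p) \<le> 1 - ?g p"
      using g exp_neg_twice_le_one_minus[of "?g p"] by simp
  qed
  finally have W: "exp (-8) \<le> (\<Prod>p\<in>B. 1 - ?g p)" .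
  have "elem_sym m ?g B \<le> (\<Sum>p\<in>B. ?g p) ^ m / fact m"
    using g by (intro elem_sym_le[OF assms(1)]) auto
  also have "\<dots> \<le> 4 ^ m / fact m"
    using assms(3) g by (intro divide_right_mono power_mono sum_nonneg) auto
  also have "\<dots> = (8 ^ m / fact m) / 2 ^ m"
  proof -
    have "(8::real) ^ m = 4 ^ m * 2 ^ m"
      by (simp flip: power_mult_distrib)
    then show ?thesis
      by simp
  qed
  also have "\<dots> \<le> exp 8 / 2 ^ m"
    using power_div_fact_le_exp[of 8 m] by (intro divide_right_mono) auto
  finally have E: "elem_sym m ?g B \<le> exp 8 / 2 ^ m" .
  have "elem_sym m ?g B / (\<Prod>p\<in>B. 1 - ?g p) \<le> (exp 8 / 2 ^ m) / exp (-8)"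
    using E W g by (intro frac_le elem_sym_nonneg) auto
  also have "\<dots> = exp 16 / 2 ^ m"
    by (simp add: exp_minus field_simps flip: exp_add)
  finally show ?thesis .
qed

section \<open>The fundamental lemma\<close>

definition block_top :: "nat \<Rightarrow> nat" where
  "block_top j = 2 ^ 2 ^ j"

text \<open>Since \<open>block_top (Suc j) = (block_top j)\<^sup>2\<close>, block \<open>j > 0\<close> consists of the primes in
  \<open>(2^2^(j-1), 2^2^j]\<close>, and block \<open>0\<close> is \<open>{2}\<close>.\<close>
definition prime_block :: "real \<Rightarrow> nat \<Rightarrow> nat set" where
  "prime_block z j = {p. prime p \<and> real p \<le> z \<and> p \<le> block_top j \<and> block_top j < p\<^sup>2}"

definition last_block :: "real \<Rightarrow> nat" where
  "last_block z = (LEAST m. z \<le> real (block_top m))"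

lemma block_top_Suc: "block_top (Suc j) = block_top j ^ 2"
  by (simp add: block_top_def power_mult[symmetric] mult.commute)

lemma block_top_mono: "i \<le> j \<Longrightarrow> block_top i \<le> block_top j"
  unfolding block_top_def by (intro power_increasing) auto

lemma block_top_gt: "j < block_top j"
  unfolding block_top_def using less_exp[of j] less_exp[of "2 ^ j"] by linarith

lemma two_le_block_top: "2 \<le> block_top j"
  using block_top_mono[of 0 j] by (simp add: block_top_def)

lemma last_block_bounds:
  assumes "2 < z"
  shows "z \<le> real (block_top (last_block z))" "1 \<le> last_block z"
    "real (block_top (last_block z - 1)) < z"
proof -
  obtain n :: nat where "z \<le> real n"
    using real_arch_simple by blast
  moreover have "real n \<le> real (block_top n)"
    using block_top_gt[of n] by simp
  ultimately have ex: "\<exists>m. z \<le> real (block_top m)"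
    by (meson order_trans)
  show top: "z \<le> real (block_top (last_block z))"
    unfolding last_block_def using ex by (rule LeastI_ex)
  show "1 \<le> last_block z"
    using top assms by (cases "last_block z") (auto simp: block_top_def)
  then have "\<not> z \<le> real (block_top (last_block z - 1))"
    unfolding last_block_def by (intro not_less_Least) simp
  then show "real (block_top (last_block z - 1)) < z"
    by simp
qed

lemma finite_prime_block: "finite (prime_block z j)"
  unfolding prime_block_def by (rule finite_subset[of _ "{..block_top j}"]) auto

lemma card_prime_block_le: "real (card (prime_block z j)) + 1 \<le> real (block_top j)"
proof -
  have "prime_block z j \<subseteq> {2..block_top j}"
    unfolding prime_block_def using prime_ge_2_nat by auto
  then have "card (prime_block z j) \<le> block_top j - 1"
    using card_mono[of "{2..block_top j}"] by fastforce
  then show ?thesis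
    using two_le_block_top[of j] by linarith
qed

lemma disjoint_prime_blocks: "disjoint_family (prime_block z)"
proof -
  have "p \<notin> prime_block z j" if "p \<in> prime_block z i" "i < j" for p i j
  proof
    assume "p \<in> prime_block z j"
    have "p\<^sup>2 \<le> block_top i ^ 2"
      using that(1) by (intro power_mono) (auto simp: prime_block_def)
    also have "\<dots> \<le> block_top j"
      using block_top_mono[of "Suc i" j] that(2) by (simp add: block_top_Suc)
    finally show False
      using \<open>p \<in> prime_block z j\<close> by (simp add: prime_block_def)
  qed
  then show ?thesis
    unfolding disjoint_family_on_def by (blast elim: linorder_neqE_nat)
qed

lemma Union_prime_blocks:
  assumes "2 < z"
  shows "(\<Union>j\<le>last_block z. prime_block z j) = {p. prime p \<and> real p \<le> z}"
proof (intro equalityI subsetI)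
  fix p assume "p \<in> {p. prime p \<and> real p \<le> z}"
  then have p: "prime p" "real p \<le> z"
    by auto
  define j where "j = (LEAST j. p \<le> block_top j)"
  have "p \<le> block_top p"
    using block_top_gt[of p] by simp
  then have "p \<le> block_top j"
    unfolding j_def by (rule LeastI)
  moreover have "j \<le> last_block z"
    unfolding j_def using p last_block_bounds(1)[OF assms] by (intro Least_le) linarith
  moreover have "block_top j < p\<^sup>2"
  proof (cases j)
    case 0
    then show ?thesis
      using \<open>p \<le> block_top j\<close> prime_ge_2_nat[OF p(1)] by (simp add: block_top_def power2_eq_square)
  next
    case (Suc i)
    then have "block_top i < p"
      using not_less_Least[of i "\<lambda>j. p \<le> block_top j"] unfolding j_def by simp
    then show ?thesis
      using Suc by (simp add: block_top_Suc power_strict_mono)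
  qed
  ultimately show "p \<in> (\<Union>j\<le>last_block z. prime_block z j)"
    using p unfolding prime_block_def by blast
qed (auto simp: prime_block_def)

lemma prime_blocks_prime_block: "finite J \<Longrightarrow> prime_blocks J (prime_block z)"
  using finite_prime_block disjoint_family_on_mono[OF subset_UNIV disjoint_prime_blocks]
  by unfold_locales (auto simp: prime_block_def)

lemma sum_inverse_prime_block_le: "(\<Sum>p\<in>prime_block z j. 1 / real p) \<le> 4"
  by (rule sum_inverse_primes_le[OF two_le_block_top[of j]]) (simp add: prime_block_def)

lemma sum_level_exponents:
  "(\<Sum>j\<le>m. (2 * (a + m - j) + 1) * 2 ^ j) + 2 * a + 2 * m + 5 = (4 * a + 6) * (2::nat) ^ m"
proof (induction m)
  case (Suc m)
  have "(\<Sum>j\<le>m. (2 * (a + Suc m - Suc j) + 1) * (2::nat) ^ Suc j)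
      = 2 * (\<Sum>j\<le>m. (2 * (a + m - j) + 1) * 2 ^ j)"
    by (simp add: sum_distrib_left mult_ac)
  then have "(\<Sum>j\<le>Suc m. (2 * (a + Suc m - j) + 1) * (2::nat) ^ j)
      = 2 * a + 2 * m + 3 + 2 * (\<Sum>j\<le>m. (2 * (a + m - j) + 1) * 2 ^ j)"
    unfolding sum.atMost_Suc_shift by simp
  then show ?case
    using Suc.IH by simp
qed simp

lemma prod_block_top_powers_le:
  "(\<Prod>j\<le>m. real (block_top j) ^ Suc (2 * (a + m - j))) \<le> (2::real) ^ ((4 * a + 6) * 2 ^ m)"
proof -
  have "(\<Prod>j\<le>m. real (block_top j) ^ Suc (2 * (a + m - j))) = (\<Prod>j\<le>m. 2 ^ ((2 * (a + m - j) + 1) * 2 ^ j))"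
  proof (rule prod.cong)
    fix j
    have "real (block_top j) = 2 ^ 2 ^ j"
      by (simp add: block_top_def)
    then show "real (block_top j) ^ Suc (2 * (a + m - j)) = 2 ^ ((2 * (a + m - j) + 1) * 2 ^ j)"
      by (simp add: power_mult[symmetric] power_add mult.commute)
  qed simp
  also have "\<dots> = 2 ^ (\<Sum>j\<le>m. (2 * (a + m - j) + 1) * 2 ^ j)"
    by (simp add: power_sum)
  also have "\<dots> \<le> (2::real) ^ ((4 * a + 6) * 2 ^ m)"
    using sum_level_exponents[where a = a and m = m] by (intro power_increasing) linarith+
  finally show ?thesis .
qed

lemma prime_block_remainder_le:
  fixes a :: nat
  assumes "4 \<le> z"
  defines "R \<equiv> (\<Prod>j\<le>last_block z. (real (card (prime_block z j)) + 1) ^ Suc (2 * (a + last_block z - j)))"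
  shows "R \<le> z ^ (8 * a + 13)" and "real (last_block z + 2) * R \<le> 2 * z ^ (8 * a + 13)"
proof -
  define m where "m = last_block z"
  have m: "1 \<le> m" "real (block_top (m - 1)) < z"
    using last_block_bounds[of z] assms unfolding m_def by auto
  have "R \<le> (\<Prod>j\<le>m. real (block_top j) ^ Suc (2 * (a + m - j)))"
    unfolding R_def m_def[symmetric] by (intro prod_mono conjI power_mono card_prime_block_le) auto
  also have "\<dots> \<le> (2::real) ^ ((4 * a + 6) * 2 ^ m)"
    by (rule prod_block_top_powers_le)
  also have "(4 * a + 6) * 2 ^ m = 2 ^ (m - 1) * (8 * a + 12)"
    using m(1) by (cases m) (simp_all add: algebra_simps)
  also have "(2::real) ^ (2 ^ (m - 1) * (8 * a + 12)) = real (block_top (m - 1)) ^ (8 * a + 12)"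
    by (simp add: block_top_def power_mult)
  also have "\<dots> \<le> z ^ (8 * a + 12)"
    using m(2) by (intro power_mono) auto
  finally have R: "R \<le> z ^ (8 * a + 12)" .
  also have "\<dots> \<le> z ^ (8 * a + 13)"
    using assms(1) by (intro power_increasing) auto
  finally show "R \<le> z ^ (8 * a + 13)" .
  have "real m < z"
    using m block_top_gt[of "m - 1"] by simp
  then have "real (m + 2) * R \<le> 2 * z * z ^ (8 * a + 12)"
    using R assms(1) unfolding R_def by (intro mult_mono prod_nonneg) auto
  also have "\<dots> = 2 * z ^ (8 * a + 13)"
    by (simp add: power_Suc[symmetric] add.commute)
  finally show "real (last_block z + 2) * R \<le> 2 * z ^ (8 * a + 13)"
    unfolding m_def .
qed

lemma geometric_error_sum_le:
  "(\<Sum>j\<le>m. exp 16 / 2 ^ Suc (2 * (a + m - j))) \<le> exp 16 / (4::real) ^ a"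
proof -
  have "exp 16 / 2 ^ Suc (2 * (a + m - j)) = exp 16 / (2 * 4 ^ a) * (1 / 4 :: real) ^ (m - j)"
    if "j \<le> m" for j
  proof -
    have "(2::real) ^ Suc (2 * (a + m - j)) = 2 * 4 ^ a * 4 ^ (m - j)"
      using that by (simp add: power_add power_mult flip: add_diff_assoc)
    then show ?thesis
      by (simp add: power_one_over)
  qed
  then have "(\<Sum>j\<le>m. exp 16 / 2 ^ Suc (2 * (a + m - j)))
      = exp 16 / (2 * 4 ^ a) * (\<Sum>j\<le>m. (1 / 4 :: real) ^ (m - j))"
    by (simp add: sum_distrib_left)
  also have "(\<Sum>j\<le>m. (1 / 4 :: real) ^ (m - j)) = (\<Sum>j\<le>m. (1 / 4) ^ j)"
    using sum.atLeastAtMost_rev[of "\<lambda>j. (1 / 4 :: real) ^ j" 0 m] by (simp add: atLeast0AtMost)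
  also have "exp 16 / (2 * 4 ^ a) * (\<Sum>j\<le>m. (1 / 4 :: real) ^ j) \<le> exp 16 / (2 * 4 ^ a) * (4 / 3)"
    using geometric_sum_less[of "1 / 4 :: real" "{..m}"] by (intro mult_left_mono) auto
  also have "\<dots> \<le> exp 16 / 4 ^ a"
    by (simp add: field_simps)
  finally show ?thesis .
qed

lemma prime_block_error_le:
  "(\<Sum>j\<le>m. elem_sym (Suc (2 * (a + m - j))) (\<lambda>p. 1 / real p) (prime_block z j)
              / (\<Prod>p\<in>prime_block z j. 1 - 1 / real p))
   \<le> exp 16 / 4 ^ a"
proof -
  have "(\<Sum>j\<le>m. elem_sym (Suc (2 * (a + m - j))) (\<lambda>p. 1 / real p) (prime_block z j)
                / (\<Prod>p\<in>prime_block z j. 1 - 1 / real p))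
      \<le> (\<Sum>j\<le>m. exp 16 / 2 ^ Suc (2 * (a + m - j)))"
    by (intro sum_mono elem_sym_div_prod_le finite_prime_block sum_inverse_prime_block_le)
       (auto simp: prime_block_def)
  also have "\<dots> \<le> exp 16 / 4 ^ a"
    by (rule geometric_error_sum_le)
  finally show ?thesis .
qed

text \<open>It is Brun's sieve on the
  blocks \<open>j \<le> m = last_block z\<close>, truncated at the levels \<open>2(a + m - j)\<close>: the large blocks
  are truncated early, which keeps the remainder polynomial in \<open>z\<close>, while the relative
  errors \<open>e\<^sup>1\<^sup>6 / 2 \<cdot> 4\<^sup>-\<^sup>(\<^sup>a\<^sup>+\<^sup>m\<^sup>-\<^sup>j\<^sup>)\<close> of the blocks still sum to at most \<open>\<delta>\<close>.\<close>
theorem sieve_S_bounds: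
  fixes a :: nat
  assumes "4 \<le> z" "0 \<le> y"
  defines "\<delta> \<equiv> exp 16 / 4 ^ a"
  shows "real (sieve_S x y z) \<le> y * mertens_prod z * exp \<delta> + z ^ (8 * a + 13)"
    and "y * mertens_prod z * (1 - \<delta> * exp \<delta>) - 2 * z ^ (8 * a + 13) \<le> real (sieve_S x y z)"
proof -
  define m where "m = last_block z"
  define k where "k j = 2 * (a + m - j)" for j
  interpret prime_blocks "{..m}" "prime_block z"
    by (rule prime_blocks_prime_block) simp
  have blocks: "(\<Union>j\<le>m. prime_block z j) = {p. prime p \<and> real p \<le> z}"
    unfolding m_def using assms(1) by (intro Union_prime_blocks) simp
  have even: "even (k j)" for j
    by (simp add: k_def)
  note bounds = sift_count_bounds[where k = k and x = x, OF even assms(2)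
      prime_block_error_le[where m = m and a = a and z = z, folded k_def \<delta>_def]]
  show "real (sieve_S x y z) \<le> y * mertens_prod z * exp \<delta> + z ^ (8 * a + 13)"
    and "y * mertens_prod z * (1 - \<delta> * exp \<delta>) - 2 * z ^ (8 * a + 13) \<le> real (sieve_S x y z)"
    using bounds prime_block_remainder_le[OF assms(1), of a, folded m_def, folded k_def]
    unfolding sieve_S_eq_sift_count mertens_prod_def blocks by (auto simp: add.commute)
qed

section \<open>Extremal sifted counts\<close>

lemma ints_in_add:
  assumes "0 \<le> y1" "0 \<le> y2"
  shows "ints_in x (y1 + y2) = ints_in x y1 \<union> ints_in (x + y1) y2"
    and "ints_in x y1 \<inter> ints_in (x + y1) y2 = {}"
  using assms by (auto simp: ints_in_def)

lemma sift_count_le: "0 \<le> y \<Longrightarrow> real (sift_count x y P) \<le> y + 1"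
  using card_mono[OF finite_ints_in, of "{n \<in> ints_in x y. \<forall>p\<in>P. \<not> int p dvd n}" x y]
    card_ints_in_le[of y x] unfolding sift_count_def by force

lemma sift_count_add:
  assumes "0 \<le> y1" "0 \<le> y2"
  shows "sift_count x (y1 + y2) P = sift_count x y1 P + sift_count (x + y1) y2 P"
  unfolding sift_count_def ints_in_add(1)[OF assms]
  by (subst card_Un_disjoint[symmetric]) (use ints_in_add(2)[OF assms] in \<open>auto intro: arg_cong[where f = card]\<close>)

lemma sift_count_mono: "y \<le> y' \<Longrightarrow> sift_count x y P \<le> sift_count x y' P"
  unfolding sift_count_def
  by (intro card_mono finite_subset[OF _ finite_ints_in[of x y']]) (auto simp: ints_in_def)

lemma finite_range_sieve_S:
  assumes "0 \<le> y"
  shows "finite (range (\<lambda>x. sieve_S x y z))"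
proof (rule finite_subset)
  show "range (\<lambda>x. sieve_S x y z) \<subseteq> {..nat \<lfloor>y + 1\<rfloor>}"
    using le_nat_floor[OF sift_count_le[OF assms]] by (auto simp: sieve_S_eq_sift_count)
qed simp

lemma sieve_S_plus_attained:
  assumes "0 \<le> y"
  obtains x where "sieve_S_plus y z = sieve_S x y z"
proof -
  have "sieve_S_plus y z = Max (range (\<lambda>x. sieve_S x y z))"
    unfolding sieve_S_plus_def using finite_range_sieve_S[OF assms] by (intro cSup_eq_Max) auto
  also have "\<dots> \<in> range (\<lambda>x. sieve_S x y z)"
    using finite_range_sieve_S[OF assms] by (intro Max_in) auto
  finally show ?thesis
    using that by blast
qed

lemma sieve_S_le_plus: "0 \<le> y \<Longrightarrow> sieve_S x y z \<le> sieve_S_plus y z"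
  unfolding sieve_S_plus_def by (intro cSup_upper bdd_above_finite finite_range_sieve_S) auto

lemma sieve_S_minus_attained:
  obtains x where "sieve_S_minus y z = sieve_S x y z"
proof -
  have "sieve_S_minus y z \<in> range (\<lambda>x. sieve_S x y z)"
    unfolding sieve_S_minus_def by (rule Inf_nat_def1) simp
  then show ?thesis
    using that by blast
qed

lemma sieve_S_minus_le: "sieve_S_minus y z \<le> sieve_S x y z"
  unfolding sieve_S_minus_def by (intro cInf_lower) auto

lemma sieve_S_mult_le:
  assumes "0 \<le> Y"
  shows "sieve_S x (real N * Y) z \<le> N * sieve_S_plus Y z"
proof (induction N arbitrary: x)
  case 0
  have "ints_in x 0 = {}"
    by (auto simp: ints_in_def)
  then show ?case
    by (simp add: sieve_S_eq_sift_count sift_count_def)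
next
  case (Suc N)
  have "sieve_S x (real (Suc N) * Y) z = sieve_S x Y z + sieve_S (x + Y) (real N * Y) z"
    using assms sift_count_add[of Y "real N * Y" x] by (simp add: sieve_S_eq_sift_count algebra_simps)
  also have "\<dots> \<le> sieve_S_plus Y z + N * sieve_S_plus Y z"
    using Suc.IH sieve_S_le_plus[OF assms] by (intro add_mono)
  finally show ?case
    by simp
qed

lemma sieve_S_mult_ge:
  assumes "0 \<le> Y"
  shows "N * sieve_S_minus Y z \<le> sieve_S x (real N * Y) z"
proof (induction N arbitrary: x)
  case (Suc N)
  have "Suc N * sieve_S_minus Y z \<le> sieve_S x Y z + sieve_S (x + Y) (real N * Y) z"
    using Suc.IH sieve_S_minus_le by (simp add: add_mono)
  also have "\<dots> = sieve_S x (real (Suc N) * Y) z"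
    using assms sift_count_add[of Y "real N * Y" x] by (simp add: sieve_S_eq_sift_count algebra_simps)
  finally show ?case .
qed simp

section \<open>The limits \<open>\<sigma>\<^sub>+\<close> and \<open>\<sigma>\<^sub>-\<close>\<close>

definition upper_ratio :: "real \<Rightarrow> real \<Rightarrow> real" where
  "upper_ratio u z = real (sieve_S_plus (z powr u) z) / (mertens_prod z * z powr u)"

definition lower_ratio :: "real \<Rightarrow> real \<Rightarrow> real" where
  "lower_ratio u z = real (sieve_S_minus (z powr u) z) / (mertens_prod z * z powr u)"

lemma sigma_plus_eq: "sigma_plus u = Limsup at_top (\<lambda>z. ereal (upper_ratio u z))"
  unfolding sigma_plus_def upper_ratio_def ..

lemma sigma_minus_eq: "sigma_minus u = Liminf at_top (\<lambda>z. ereal (lower_ratio u z))"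
  unfolding sigma_minus_def lower_ratio_def ..

lemma upper_ratio_nonneg: "0 \<le> upper_ratio u z"
  unfolding upper_ratio_def using mertens_prod_nonneg by simp

lemma lower_ratio_nonneg: "0 \<le> lower_ratio u z"
  unfolding lower_ratio_def using mertens_prod_nonneg by simp

lemma lower_ratio_le_upper_ratio: "lower_ratio u z \<le> upper_ratio u z"
  unfolding lower_ratio_def upper_ratio_def using mertens_prod_nonneg
    sieve_S_minus_le[of "z powr u" z 0] sieve_S_le_plus[of "z powr u" 0 z]
  by (intro divide_right_mono) auto

lemma upper_ratio_le:
  assumes "1 \<le> z" "u < v"
  shows "upper_ratio v z \<le> (1 + z powr (u - v)) * upper_ratio u z"
proof -
  define t where "t = z powr (v - u)"
  define N where "N = nat \<lceil>t\<rceil>"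
  have t: "1 \<le> t" "z powr v = t * z powr u" "1 / t = z powr (u - v)"
    using assms unfolding t_def
    by (simp_all add: ge_one_powr_ge_zero flip: powr_add powr_minus_divide)
  have N: "t \<le> real N" "real N \<le> t + 1"
    unfolding N_def using t(1) by linarith+
  have "upper_ratio v z \<le> real N / t * upper_ratio u z"
  proof -
    obtain x where "sieve_S_plus (z powr v) z = sieve_S x (z powr v) z"
      using sieve_S_plus_attained by (metis powr_ge_zero)
    moreover have "sieve_S x (z powr v) z \<le> sieve_S x (real N * z powr u) z"
      unfolding t(2) sieve_S_eq_sift_count using N by (intro sift_count_mono mult_right_mono) auto
    moreover have "sieve_S x (real N * z powr u) z \<le> N * sieve_S_plus (z powr u) z"
      by (intro sieve_S_mult_le) simp
    ultimately have "real (sieve_S_plus (z powr v) z) \<le> real N * real (sieve_S_plus (z powr u) z)"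
      by (metis of_nat_le_iff of_nat_mult order_trans)
    then show ?thesis
      unfolding upper_ratio_def t(2) using t(1) mertens_prod_pos[OF assms(1)] assms(1)
      by (simp add: divide_right_mono field_simps)
  qed
  also have "\<dots> \<le> (1 + z powr (u - v)) * upper_ratio u z"
    using N t by (intro mult_right_mono upper_ratio_nonneg) (simp_all add: field_simps)
  finally show ?thesis .
qed

lemma lower_ratio_ge:
  assumes "1 \<le> z" "u < v"
  shows "(1 - z powr (u - v)) * lower_ratio u z \<le> lower_ratio v z"
proof -
  define t where "t = z powr (v - u)"
  define N where "N = nat \<lfloor>t\<rfloor>"
  have t: "1 \<le> t" "z powr v = t * z powr u" "1 / t = z powr (u - v)"
    using assms unfolding t_def
    by (simp_all add: ge_one_powr_ge_zero flip: powr_add powr_minus_divide)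
  have N: "real N \<le> t" "t - 1 \<le> real N"
    unfolding N_def using t(1) by linarith+
  have "(1 - z powr (u - v)) * lower_ratio u z \<le> real N / t * lower_ratio u z"
    using N t by (intro mult_right_mono lower_ratio_nonneg) (simp_all add: field_simps)
  also have "real N / t * lower_ratio u z \<le> lower_ratio v z"
  proof -
    obtain x where "sieve_S_minus (z powr v) z = sieve_S x (z powr v) z"
      using sieve_S_minus_attained by metis
    moreover have "N * sieve_S_minus (z powr u) z \<le> sieve_S x (real N * z powr u) z"
      by (intro sieve_S_mult_ge) simp
    moreover have "sieve_S x (real N * z powr u) z \<le> sieve_S x (z powr v) z"
      unfolding t(2) sieve_S_eq_sift_count using N by (intro sift_count_mono mult_right_mono) auto
    ultimately have "real N * real (sieve_S_minus (z powr u) z) \<le> real (sieve_S_minus (z powr v) z)"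
      by (metis of_nat_le_iff of_nat_mult order_trans)
    then show ?thesis
      unfolding lower_ratio_def t(2) using t(1) mertens_prod_pos[OF assms(1)] assms(1)
      by (simp add: divide_right_mono field_simps)
  qed
  finally show ?thesis .
qed

lemma Limsup_Liminf_le_if_scaled_le:
  fixes f g :: "'a \<Rightarrow> real"
  assumes "F \<noteq> bot" "\<And>x. 0 \<le> g x"
    and "\<And>c. 0 < c \<Longrightarrow> c < 1 \<Longrightarrow> eventually (\<lambda>x. c * f x \<le> g x) F"
  shows "Limsup F (\<lambda>x. ereal (f x)) \<le> Limsup F (\<lambda>x. ereal (g x))"
    and "Liminf F (\<lambda>x. ereal (f x)) \<le> Liminf F (\<lambda>x. ereal (g x))"
proof -
  have scaled: "eventually (\<lambda>x. ereal c * ereal (f x) \<le> ereal (g x)) F" if "0 < c" "c < 1" for c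
    using assms(3)[OF that] by eventually_elim simp
  have nonneg: "0 \<le> Limsup F (\<lambda>x. ereal (g x))" "0 \<le> Liminf F (\<lambda>x. ereal (g x))"
    using assms(1,2) by (auto intro!: le_Limsup Liminf_bounded)
  show "Limsup F (\<lambda>x. ereal (f x)) \<le> Limsup F (\<lambda>x. ereal (g x))"
  proof (rule ereal_le_mult_one_interval)
    fix c :: ereal assume "0 < c" "c < 1"
    then obtain r where "c = ereal r" "0 < r" "r < 1"
      by (cases c) auto
    have "Limsup F (\<lambda>x. ereal r * ereal (f x)) = ereal r * Limsup F (\<lambda>x. ereal (f x))"
      using \<open>0 < r\<close> by (intro Limsup_ereal_mult_left[OF assms(1)]) simp
    moreover have "Limsup F (\<lambda>x. ereal r * ereal (f x)) \<le> Limsup F (\<lambda>x. ereal (g x))"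
      using \<open>0 < r\<close> \<open>r < 1\<close> by (intro Limsup_mono scaled)
    ultimately show "c * Limsup F (\<lambda>x. ereal (f x)) \<le> Limsup F (\<lambda>x. ereal (g x))"
      unfolding \<open>c = ereal r\<close> by simp
  qed (use nonneg in auto)
  show "Liminf F (\<lambda>x. ereal (f x)) \<le> Liminf F (\<lambda>x. ereal (g x))"
  proof (rule ereal_le_mult_one_interval)
    fix c :: ereal assume "0 < c" "c < 1"
    then obtain r where "c = ereal r" "0 < r" "r < 1"
      by (cases c) auto
    have "Liminf F (\<lambda>x. ereal r * ereal (f x)) = ereal r * Liminf F (\<lambda>x. ereal (f x))"
      using \<open>0 < r\<close> by (intro Liminf_ereal_mult_left[OF assms(1)]) simp
    moreover have "Liminf F (\<lambda>x. ereal r * ereal (f x)) \<le> Liminf F (\<lambda>x. ereal (g x))"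
      using \<open>0 < r\<close> \<open>r < 1\<close> by (intro Liminf_mono scaled)
    ultimately show "c * Liminf F (\<lambda>x. ereal (f x)) \<le> Liminf F (\<lambda>x. ereal (g x))"
      unfolding \<open>c = ereal r\<close> by simp
  qed (use nonneg in auto)
qed

lemma eventually_powr_neg_le:
  fixes u v e :: real
  assumes "u < v" "0 < e"
  shows "eventually (\<lambda>z. z powr (u - v) \<le> e) at_top"
proof -
  have "((\<lambda>z::real. z powr (u - v)) \<longlongrightarrow> 0) at_top"
    using assms(1) by (intro tendsto_neg_powr filterlim_ident) auto
  then have "eventually (\<lambda>z. z powr (u - v) < e) at_top"
    using assms(2) by (rule order_tendstoD(2))
  then show ?thesis
    by (rule eventually_mono) simp
qed

lemma sigma_plus_antimono:
  assumes "u \<le> v"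
  shows "sigma_plus v \<le> sigma_plus u"
proof (cases "u = v")
  case False
  then have "u < v"
    using assms by simp
  have "eventually (\<lambda>z. c * upper_ratio v z \<le> upper_ratio u z) at_top" if "0 < c" "c < 1" for c
  proof -
    have "eventually (\<lambda>z. z powr (u - v) \<le> (1 - c) / c) at_top"
      using that by (intro eventually_powr_neg_le[OF \<open>u < v\<close>]) simp
    then show ?thesis
      using eventually_ge_at_top[of 1]
    proof eventually_elim
      case (elim z)
      have "c * upper_ratio v z \<le> c * (1 + z powr (u - v)) * upper_ratio u z"
        using upper_ratio_le[OF elim(2) \<open>u < v\<close>] that by (simp add: mult.assoc)
      also have "\<dots> \<le> 1 * upper_ratio u z"
        using elim(1) that by (intro mult_right_mono upper_ratio_nonneg) (simp add: field_simps)
      finally show ?case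
        by simp
    qed
  qed
  then show ?thesis
    unfolding sigma_plus_eq
    by (intro Limsup_Liminf_le_if_scaled_le upper_ratio_nonneg) auto
qed simp

lemma sigma_minus_mono:
  assumes "u \<le> v"
  shows "sigma_minus u \<le> sigma_minus v"
proof (cases "u = v")
  case False
  then have "u < v"
    using assms by simp
  have "eventually (\<lambda>z. c * lower_ratio u z \<le> lower_ratio v z) at_top" if "0 < c" "c < 1" for c
  proof -
    have "eventually (\<lambda>z. z powr (u - v) \<le> 1 - c) at_top"
      using that by (intro eventually_powr_neg_le[OF \<open>u < v\<close>]) simp
    then show ?thesis
      using eventually_ge_at_top[of 1]
    proof eventually_elim
      case (elim z)
      have "c * lower_ratio u z \<le> (1 - z powr (u - v)) * lower_ratio u z"
        using elim(1) by (intro mult_right_mono lower_ratio_nonneg) simp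
      also have "\<dots> \<le> lower_ratio v z"
        using lower_ratio_ge[OF elim(2) \<open>u < v\<close>] .
      finally show ?case .
    qed
  qed
  then show ?thesis
    unfolding sigma_minus_eq
    by (intro Limsup_Liminf_le_if_scaled_le lower_ratio_nonneg) auto
qed simp

lemma remainder_ratio_le:
  fixes a :: nat
  assumes "4 \<le> z" "real (8 * a + 15) \<le> u"
  shows "z ^ (8 * a + 13) / (mertens_prod z * z powr u) \<le> 1 / z"
proof -
  have "z ^ (8 * a + 15) = z powr real (8 * a + 15)"
    using assms(1) powr_realpow[of z "8 * a + 15"] by simp
  also have "\<dots> \<le> z powr u"
    using assms by (intro powr_mono) auto
  finally have "z ^ (8 * a + 15) \<le> z powr u" .
  moreover have "1 / z \<le> mertens_prod z"
    using assms(1) by (intro mertens_prod_ge_inverse) simp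
  ultimately have "1 / z * z ^ (8 * a + 15) \<le> mertens_prod z * z powr u"
    using assms(1) mertens_prod_nonneg by (intro mult_mono) auto
  moreover have "1 / z * z ^ (8 * a + 15) = z * z ^ (8 * a + 13)"
  proof -
    have "z ^ (8 * a + 15) = z ^ (8 * a + 13) * z\<^sup>2"
      by (simp add: add.commute flip: power_add)
    then show ?thesis
      using assms(1) by (simp add: power2_eq_square)
  qed
  ultimately have "z ^ (8 * a + 13) / (mertens_prod z * z powr u) \<le> z ^ (8 * a + 13) / (z * z ^ (8 * a + 13))"
    using assms(1) mertens_prod_pos[of z] by (intro divide_left_mono mult_pos_pos) auto
  then show ?thesis
    using assms(1) by simp
qed

lemma ratio_bounds:
  fixes a :: nat
  assumes "4 \<le> z" "real (8 * a + 15) \<le> u"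
  defines "\<delta> \<equiv> exp 16 / 4 ^ a"
  shows "upper_ratio u z \<le> exp \<delta> + 1 / z"
    and "1 - \<delta> * exp \<delta> - 2 / z \<le> lower_ratio u z"
proof -
  define Y where "Y = z powr u"
  define W where "W = mertens_prod z"
  have pos: "0 < Y" "0 < W"
    using assms(1) mertens_prod_pos[of z] by (auto simp: Y_def W_def)
  have rem: "z ^ (8 * a + 13) / (W * Y) \<le> 1 / z"
    unfolding W_def Y_def using remainder_ratio_le[OF assms(1,2)] .
  obtain x where "sieve_S_plus Y z = sieve_S x Y z"
    using sieve_S_plus_attained pos(1) by (metis less_imp_le)
  then have "real (sieve_S_plus Y z) \<le> Y * W * exp \<delta> + z ^ (8 * a + 13)"
    using sieve_S_bounds(1)[OF assms(1), of Y x a] pos unfolding W_def \<delta>_def by simp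
  then have "upper_ratio u z \<le> (Y * W * exp \<delta> + z ^ (8 * a + 13)) / (W * Y)"
    unfolding upper_ratio_def W_def[symmetric] Y_def[symmetric] using pos by (intro divide_right_mono) auto
  also have "\<dots> = exp \<delta> + z ^ (8 * a + 13) / (W * Y)"
    using pos by (simp add: field_simps)
  finally show "upper_ratio u z \<le> exp \<delta> + 1 / z"
    using rem by linarith
  obtain x where "sieve_S_minus Y z = sieve_S x Y z"
    using sieve_S_minus_attained by metis
  then have "Y * W * (1 - \<delta> * exp \<delta>) - 2 * z ^ (8 * a + 13) \<le> real (sieve_S_minus Y z)"
    using sieve_S_bounds(2)[OF assms(1), of Y a x] pos unfolding W_def \<delta>_def by simp
  then have "(Y * W * (1 - \<delta> * exp \<delta>) - 2 * z ^ (8 * a + 13)) / (W * Y) \<le> lower_ratio u z"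
    unfolding lower_ratio_def W_def[symmetric] Y_def[symmetric] using pos by (intro divide_right_mono) auto
  moreover have "(Y * W * (1 - \<delta> * exp \<delta>) - 2 * z ^ (8 * a + 13)) / (W * Y)
      = 1 - \<delta> * exp \<delta> - 2 * (z ^ (8 * a + 13) / (W * Y))"
    using pos by (simp add: field_simps)
  ultimately show "1 - \<delta> * exp \<delta> - 2 / z \<le> lower_ratio u z"
    using rem by linarith
qed

lemma tendsto_add_inverse_at_top: "((\<lambda>z::real. c + b / z) \<longlongrightarrow> c) at_top"
  using tendsto_add[OF tendsto_const tendsto_divide_0[OF tendsto_const filterlim_at_top_imp_at_infinity[OF filterlim_ident]], of c b]
  by simp

lemma sigma_bounds:
  fixes a :: nat
  assumes "real (8 * a + 15) \<le> u"
  defines "\<delta> \<equiv> exp 16 / 4 ^ a"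
  shows "ereal (1 - \<delta> * exp \<delta>) \<le> sigma_minus u"
    and "sigma_minus u \<le> sigma_plus u"
    and "sigma_plus u \<le> ereal (exp \<delta>)"
proof -
  have "eventually (\<lambda>z. ereal (upper_ratio u z) \<le> ereal (exp \<delta> + 1 / z)) at_top"
    using eventually_ge_at_top[of 4]
    by (rule eventually_mono) (use ratio_bounds(1)[OF _ assms(1), folded \<delta>_def] in simp)
  then have "sigma_plus u \<le> Limsup at_top (\<lambda>z. ereal (exp \<delta> + 1 / z))"
    unfolding sigma_plus_eq by (rule Limsup_mono)
  also have "\<dots> = ereal (exp \<delta>)"
    by (intro lim_imp_Limsup tendsto_ereal tendsto_add_inverse_at_top) simp
  finally show "sigma_plus u \<le> ereal (exp \<delta>)" .
  have "((\<lambda>z. 1 - \<delta> * exp \<delta> - 2 / z) \<longlongrightarrow> 1 - \<delta> * exp \<delta>) at_top"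
    using tendsto_add_inverse_at_top[of "1 - \<delta> * exp \<delta>" "-2"] by simp
  then have "ereal (1 - \<delta> * exp \<delta>) = Liminf at_top (\<lambda>z. ereal (1 - \<delta> * exp \<delta> - 2 / z))"
    by (intro lim_imp_Liminf[symmetric] tendsto_ereal) simp_all
  also have "\<dots> \<le> sigma_minus u"
  proof -
    have "eventually (\<lambda>z. ereal (1 - \<delta> * exp \<delta> - 2 / z) \<le> ereal (lower_ratio u z)) at_top"
      using eventually_ge_at_top[of 4]
      by (rule eventually_mono) (use ratio_bounds(2)[OF _ assms(1), folded \<delta>_def] in simp)
    then show ?thesis
      unfolding sigma_minus_eq by (rule Liminf_mono)
  qed
  finally show "ereal (1 - \<delta> * exp \<delta>) \<le> sigma_minus u" .
  have "sigma_minus u \<le> Liminf at_top (\<lambda>z. ereal (upper_ratio u z))"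
    unfolding sigma_minus_eq by (intro Liminf_mono) (simp add: lower_ratio_le_upper_ratio)
  also have "\<dots> \<le> sigma_plus u"
    unfolding sigma_plus_eq by (intro Liminf_le_Limsup) simp
  finally show "sigma_minus u \<le> sigma_plus u" .
qed

lemma tendsto_ereal_squeeze:
  fixes f :: "real \<Rightarrow> ereal" and lo hi :: "nat \<Rightarrow> real"
  assumes "lo \<longlonglongrightarrow> L" "hi \<longlonglongrightarrow> L"
    and "\<And>a. eventually (\<lambda>u. ereal (lo a) \<le> f u \<and> f u \<le> ereal (hi a)) at_top"
  shows "(f \<longlongrightarrow> ereal L) at_top"
proof (rule order_tendstoI)
  fix b assume "b < ereal L"
  then obtain a where a: "b < ereal (lo a)"
    using order_tendstoD(1)[OF tendsto_ereal[OF assms(1)]] by (meson eventually_sequentially le_refl)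
  show "eventually (\<lambda>u. b < f u) at_top"
    using assms(3)[of a] by (rule eventually_mono) (use a in \<open>auto intro: less_le_trans\<close>)
next
  fix b assume "ereal L < b"
  then obtain a where a: "ereal (hi a) < b"
    using order_tendstoD(2)[OF tendsto_ereal[OF assms(2)]] by (meson eventually_sequentially le_refl)
  show "eventually (\<lambda>u. f u < b) at_top"
    using assms(3)[of a] by (rule eventually_mono) (use a in \<open>auto intro: le_less_trans\<close>)
qed

lemma sigma_tendsto_one: "(sigma_plus \<longlongrightarrow> 1) at_top" "(sigma_minus \<longlongrightarrow> 1) at_top"
proof -
  define \<delta> where "\<delta> a = (exp 16 / 4 ^ a :: real)" for a :: nat
  have "\<delta> \<longlonglongrightarrow> 0"
    unfolding \<delta>_def by (intro tendsto_divide_0[OF tendsto_const] filterlim_realpow_sequentially_gt1) simp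
  then have lo: "(\<lambda>a. 1 - \<delta> a * exp (\<delta> a)) \<longlonglongrightarrow> 1" and hi: "(\<lambda>a. exp (\<delta> a)) \<longlonglongrightarrow> 1"
    by (auto intro!: tendsto_eq_intros)
  have bounds: "eventually (\<lambda>u. ereal (1 - \<delta> a * exp (\<delta> a)) \<le> sigma_minus u \<and> sigma_minus u \<le> sigma_plus u
      \<and> sigma_plus u \<le> ereal (exp (\<delta> a))) at_top" for a
    using eventually_ge_at_top[of "real (8 * a + 15)"] by eventually_elim (use sigma_bounds \<delta>_def in auto)
  show "(sigma_plus \<longlongrightarrow> 1) at_top"
    unfolding one_ereal_def
  proof (rule tendsto_ereal_squeeze[OF lo hi])
    show "eventually (\<lambda>u. ereal (1 - \<delta> a * exp (\<delta> a)) \<le> sigma_plus u \<and> sigma_plus u \<le> ereal (exp (\<delta> a))) at_top"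
      for a using bounds[of a] by (rule eventually_mono) (meson order_trans)
  qed
  show "(sigma_minus \<longlongrightarrow> 1) at_top"
    unfolding one_ereal_def
  proof (rule tendsto_ereal_squeeze[OF lo hi])
    show "eventually (\<lambda>u. ereal (1 - \<delta> a * exp (\<delta> a)) \<le> sigma_minus u \<and> sigma_minus u \<le> ereal (exp (\<delta> a))) at_top"
      for a using bounds[of a] by (rule eventually_mono) (meson order_trans)
  qed
qed

theorem lemma1:
  shows "(\<forall>u v. 1 \<le> u \<longrightarrow> u \<le> v \<longrightarrow> sigma_plus v \<le> sigma_plus u)
       \<and> (\<forall>u v. 1 \<le> u \<longrightarrow> u \<le> v \<longrightarrow> sigma_minus u \<le> sigma_minus v)
       \<and> (sigma_plus \<longlongrightarrow> 1) at_top
       \<and> (sigma_minus \<longlongrightarrow> 1) at_top"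
  using sigma_plus_antimono sigma_minus_mono sigma_tendsto_one by blast

end
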